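(* Let $\Bbbk$ be algebraically closed, $T$ a torus acting linearly on a finite-dimensional $\Bbbk$-vector space $V$, $X\subseteq\mathbb PV$ a closed $T$-invariant subscheme with $X^T$ finite, and $S:\mathbb G_m\to T$ with $X^S=X^T$. If $X=\bigcup_iX_i$ is the decomposition into irreducible components, then $\Delta(X,S)=\bigcup_i\Delta(X_i,S)$.
   Context: For a closed $S$-invariant $Z\subseteq\mathbb PV$ with finitely many fixed points and $f\in Z^S$, $Z_f=\{z\in Z:\lim_{t\to0}S(t)z=f\}$ is the B-B stratum; $\overline{Z_\emptyset}=Z$, $\overline{Z_{f_0,\ldots,f_k}}=\overline{\overline{Z_{f_0,\ldots,f_{k-1}}}\cap Z_{f_k}}$. A closure chain of $Z$ is a nonrepeating $(f_0,\ldots,f_k)$ in $Z^S$ with $\overline{Z_{f_0,\ldots,f_k}}\ne\emptyset$, and $\Delta(Z,S)$ is the simplicial complex of closure chains regarded as subsets of $Z^S$. *)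

theory Defs
  imports Main "HOL-Computational_Algebra.Polynomial"
begin

definition alg_closed :: "'k::field itself \<Rightarrow> bool" where
  "alg_closed _ \<longleftrightarrow> (\<forall>p::'k poly. 0 < degree p \<longrightarrow> (\<exists>x. poly p x = 0))"

definition smul :: "'k::field \<Rightarrow> ('n \<Rightarrow> 'k) \<Rightarrow> ('n \<Rightarrow> 'k)" where
  "smul c v = (\<lambda>j. c * v j)"

text \<open>A point of P(V) is represented by the set of nonzero vectors spanning the line.\<close>
definition proj_pt :: "('n \<Rightarrow> 'k::field) \<Rightarrow> ('n \<Rightarrow> 'k) set" where
  "proj_pt v = {smul c v | c. c \<noteq> 0}"

definition PV :: "('n \<Rightarrow> 'k::field) set set" where
  "PV = proj_pt ` {v. v \<noteq> (\<lambda>_. 0)}"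

text \<open>A polynomial in the coordinates is a finitely supported function from exponent
  vectors (monomials) to coefficients.\<close>
definition is_poly :: "(('n \<Rightarrow> nat) \<Rightarrow> 'k::field) \<Rightarrow> bool" where
  "is_poly f \<longleftrightarrow> finite {m. f m \<noteq> 0}"

definition homogeneous :: "(('n::finite \<Rightarrow> nat) \<Rightarrow> 'k::field) \<Rightarrow> bool" where
  "homogeneous f \<longleftrightarrow> is_poly f \<and> (\<exists>d. \<forall>m. f m \<noteq> 0 \<longrightarrow> (\<Sum>i\<in>UNIV. m i) = d)"

definition peval :: "(('n::finite \<Rightarrow> nat) \<Rightarrow> 'k::field) \<Rightarrow> ('n \<Rightarrow> 'k) \<Rightarrow> 'k" where
  "peval f v = (\<Sum>m\<in>{m. f m \<noteq> 0}. f m * (\<Prod>i\<in>UNIV. v i ^ m i))"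

definition proj_closed :: "('n::finite \<Rightarrow> 'k::field) set set \<Rightarrow> bool" where
  "proj_closed Z \<longleftrightarrow> (\<exists>F. (\<forall>f\<in>F. homogeneous f) \<and>
      Z = {p \<in> PV. \<forall>f\<in>F. \<forall>v\<in>p. peval f v = 0})"

definition pclosure :: "('n::finite \<Rightarrow> 'k::field) set set \<Rightarrow> ('n \<Rightarrow> 'k) set set" where
  "pclosure A = \<Inter>{Z. proj_closed Z \<and> A \<subseteq> Z}"

definition proj_irreducible :: "('n::finite \<Rightarrow> 'k::field) set set \<Rightarrow> bool" where
  "proj_irreducible Z \<longleftrightarrow> proj_closed Z \<and> Z \<noteq> {} \<and>
     (\<forall>A B. proj_closed A \<longrightarrow> proj_closed B \<longrightarrow> Z = A \<union> B \<longrightarrow> Z = A \<or> Z = B)"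

definition irr_components :: "('n::finite \<Rightarrow> 'k::field) set set \<Rightarrow> ('n \<Rightarrow> 'k) set set set" where
  "irr_components X = {C. C \<subseteq> X \<and> proj_irreducible C \<and>
      (\<forall>D. D \<subseteq> X \<longrightarrow> proj_irreducible D \<longrightarrow> C \<subseteq> D \<longrightarrow> D = C)}"

text \<open>The torus T = (k^*)^'r acts diagonally on V with weights w j :: 'r \<Rightarrow> int
  (character of the j-th basis vector).\<close>
definition torus :: "('r::finite \<Rightarrow> 'k::field) set" where
  "torus = {t. \<forall>a. t a \<noteq> 0}"

definition tact :: "('n \<Rightarrow> 'r::finite \<Rightarrow> int) \<Rightarrow> ('r \<Rightarrow> 'k::field) \<Rightarrow> ('n \<Rightarrow> 'k) \<Rightarrow> ('n \<Rightarrow> 'k)" where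
  "tact w t v = (\<lambda>j. (\<Prod>a\<in>UNIV. t a powi w j a) * v j)"

definition pact :: "('n \<Rightarrow> 'r::finite \<Rightarrow> int) \<Rightarrow> ('r \<Rightarrow> 'k::field) \<Rightarrow> ('n \<Rightarrow> 'k) set \<Rightarrow> ('n \<Rightarrow> 'k) set" where
  "pact w t p = tact w t ` p"

definition T_invariant :: "('n \<Rightarrow> 'r::finite \<Rightarrow> int) \<Rightarrow> ('n \<Rightarrow> 'k::field) set set \<Rightarrow> bool" where
  "T_invariant w X \<longleftrightarrow> (\<forall>t\<in>(torus :: ('r \<Rightarrow> 'k) set). \<forall>p\<in>X. pact w t p \<in> X)"

definition T_fixed :: "('n \<Rightarrow> 'r::finite \<Rightarrow> int) \<Rightarrow> ('n \<Rightarrow> 'k::field) set set \<Rightarrow> ('n \<Rightarrow> 'k) set set" where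
  "T_fixed w X = {p\<in>X. \<forall>t\<in>(torus :: ('r \<Rightarrow> 'k) set). pact w t p = p}"

text \<open>A one-parameter subgroup S : G_m \<rightarrow> T is given by a cocharacter lam :: 'r \<Rightarrow> int,
  S(c) = (c^(lam a))_a.\<close>
definition Sgrp :: "('r::finite \<Rightarrow> int) \<Rightarrow> 'k::field \<Rightarrow> ('r \<Rightarrow> 'k)" where
  "Sgrp lam c = (\<lambda>a. c powi lam a)"

definition S_fixed :: "('n \<Rightarrow> 'r::finite \<Rightarrow> int) \<Rightarrow> ('r \<Rightarrow> int) \<Rightarrow> ('n \<Rightarrow> 'k::field) set set \<Rightarrow> ('n \<Rightarrow> 'k) set set" where
  "S_fixed w lam X = {p\<in>X. \<forall>c::'k. c \<noteq> 0 \<longrightarrow> pact w (Sgrp lam c) p = p}"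

text \<open>Weight of the j-th coordinate under S: S(c) acts on coordinate j by c^(sweight w lam j).\<close>
definition sweight :: "('n \<Rightarrow> 'r::finite \<Rightarrow> int) \<Rightarrow> ('r \<Rightarrow> int) \<Rightarrow> 'n \<Rightarrow> int" where
  "sweight w lam j = (\<Sum>a\<in>UNIV. w j a * lam a)"

text \<open>The limit lim_{c\<rightarrow>0} S(c) p: for a representative v, S(c) v = (c^(e_j) v_j)_j;
  multiplying by c^(-m), m the minimal exponent on the support of v, gives a polynomial
  curve in V whose value at c = 0 is nonzero; its class is the limit.\<close>
definition S_limit :: "('n::finite \<Rightarrow> 'r::finite \<Rightarrow> int) \<Rightarrow> ('r \<Rightarrow> int) \<Rightarrow> ('n \<Rightarrow> 'k::field) set \<Rightarrow> ('n \<Rightarrow> 'k) set" where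
  "S_limit w lam p = (let v = (SOME v. v \<in> p);
       m = Min (sweight w lam ` {j. v j \<noteq> 0})
     in proj_pt (\<lambda>j. if sweight w lam j = m then v j else 0))"

definition BB_stratum :: "('n::finite \<Rightarrow> 'r::finite \<Rightarrow> int) \<Rightarrow> ('r \<Rightarrow> int) \<Rightarrow> ('n \<Rightarrow> 'k::field) set set
    \<Rightarrow> ('n \<Rightarrow> 'k) set \<Rightarrow> ('n \<Rightarrow> 'k) set set" where
  "BB_stratum w lam Z f = {z\<in>Z. S_limit w lam z = f}"

text \<open>chain_closure Z [f0,...,fk] = closure(Z_{f0,...,fk}); chain_closure Z [] = Z.\<close>
definition chain_closure :: "('n::finite \<Rightarrow> 'r::finite \<Rightarrow> int) \<Rightarrow> ('r \<Rightarrow> int) \<Rightarrow> ('n \<Rightarrow> 'k::field) set set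
    \<Rightarrow> ('n \<Rightarrow> 'k) set list \<Rightarrow> ('n \<Rightarrow> 'k) set set" where
  "chain_closure w lam Z fs = foldl (\<lambda>A f. pclosure (A \<inter> BB_stratum w lam Z f)) Z fs"

definition closure_chain :: "('n::finite \<Rightarrow> 'r::finite \<Rightarrow> int) \<Rightarrow> ('r \<Rightarrow> int) \<Rightarrow> ('n \<Rightarrow> 'k::field) set set
    \<Rightarrow> ('n \<Rightarrow> 'k) set list \<Rightarrow> bool" where
  "closure_chain w lam Z fs \<longleftrightarrow> distinct fs \<and> set fs \<subseteq> S_fixed w lam Z \<and> chain_closure w lam Z fs \<noteq> {}"

definition Delta :: "('n::finite \<Rightarrow> 'r::finite \<Rightarrow> int) \<Rightarrow> ('r \<Rightarrow> int) \<Rightarrow> ('n \<Rightarrow> 'k::field) set set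
    \<Rightarrow> ('n \<Rightarrow> 'k) set set set" where
  "Delta w lam Z = {set fs | fs. closure_chain w lam Z fs}"

end

theory Submission
  imports Defs "HOL-Library.List_Lexorder" "HOL-Library.FuncSet"
begin

text \<open>The Zariski topology on \<open>P(V)\<close> is Noetherian (by Dickson's lemma and leading monomials,
  ascending chains of polynomial ideals stabilise), so \<open>X\<close> has finitely many irreducible
  components and they cover \<open>X\<close>. The torus permutes these components; as \<open>\<Bbbk>\<close> is
  algebraically closed, every \<open>S(c)\<close> is a high power of some \<open>S(h)\<close>, hence fixes each
  component. A closed \<open>S\<close>-invariant set contains the limits of its points, because
  \<open>c \<mapsto> f(S(c) v)\<close> is, up to a power of \<open>c\<close>, a polynomial whose value at \<open>0\<close> is \<open>f\<close>
  evaluated at the limit. Therefore a B-B stratum of \<open>X\<close> meets a component \<open>C\<close> in the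
  corresponding stratum of \<open>C\<close>, and since closure commutes with finite unions, every closure
  chain of \<open>X\<close> is a closure chain of some component; the converse is monotonicity.\<close>

section \<open>Polynomials in the coordinates\<close>

definition psupp :: "(('n \<Rightarrow> nat) \<Rightarrow> 'k::field) \<Rightarrow> ('n \<Rightarrow> nat) set" where
  "psupp f = {m. f m \<noteq> 0}"

definition mon_eval :: "('n::finite \<Rightarrow> nat) \<Rightarrow> ('n \<Rightarrow> 'k::field) \<Rightarrow> 'k" where
  "mon_eval m v = (\<Prod>i\<in>UNIV. v i ^ m i)"

definition mdeg :: "('n::finite \<Rightarrow> nat) \<Rightarrow> nat" where
  "mdeg m = (\<Sum>i\<in>UNIV. m i)"

definition madd :: "('n \<Rightarrow> nat) \<Rightarrow> ('n \<Rightarrow> nat) \<Rightarrow> ('n \<Rightarrow> nat)" where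
  "madd a b = (\<lambda>i. a i + b i)"

lemma is_poly_iff_finite_psupp: "is_poly f \<longleftrightarrow> finite (psupp f)"
  by (simp add: is_poly_def psupp_def)

lemma psupp_eq_empty_iff: "psupp f = {} \<longleftrightarrow> f = (\<lambda>_. 0)"
  by (auto simp: psupp_def)

lemma peval_eq_sum_psupp: "peval f v = (\<Sum>m\<in>psupp f. f m * mon_eval m v)"
  by (simp add: peval_def psupp_def mon_eval_def)

lemma peval_eq_sum_superset:
  assumes "finite S" "psupp f \<subseteq> S"
  shows "peval f v = (\<Sum>m\<in>S. f m * mon_eval m v)"
  unfolding peval_eq_sum_psupp
  by (rule sum.mono_neutral_left) (use assms in \<open>auto simp: psupp_def\<close>)

lemma madd_commute: "madd a b = madd b a"
  by (simp add: madd_def add.commute)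

lemma mon_eval_madd: "mon_eval (madd a b) v = mon_eval a v * mon_eval b v"
  by (simp add: mon_eval_def madd_def power_add prod.distrib)

lemma mdeg_madd: "mdeg (madd a b) = mdeg a + mdeg b"
  by (simp add: mdeg_def madd_def sum.distrib)

lemma mon_eval_smul: "mon_eval m (smul c v) = c ^ mdeg m * mon_eval m v"
  by (simp add: mon_eval_def smul_def mdeg_def power_mult_distrib prod.distrib power_sum)

lemma mon_eval_mult: "mon_eval m (\<lambda>j. a j * b j) = mon_eval m a * mon_eval m b"
  by (simp add: mon_eval_def power_mult_distrib prod.distrib)

lemma mon_eval_eq_0_iff: "mon_eval m v = 0 \<longleftrightarrow> (\<exists>j. m j > 0 \<and> v j = (0::'k::field))"
  by (auto simp: mon_eval_def prod_zero_iff)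

lemma peval_diff:
  assumes "is_poly f" "is_poly g"
  shows "peval (\<lambda>m. f m - g m) v = peval f v - peval g v"
proof -
  let ?S = "psupp f \<union> psupp g"
  have fin: "finite ?S" using assms by (simp add: is_poly_iff_finite_psupp)
  have "peval (\<lambda>m. f m - g m) v = (\<Sum>m\<in>?S. (f m - g m) * mon_eval m v)"
    by (rule peval_eq_sum_superset[OF fin]) (auto simp: psupp_def)
  also have "\<dots> = (\<Sum>m\<in>?S. f m * mon_eval m v) - (\<Sum>m\<in>?S. g m * mon_eval m v)"
    by (simp add: left_diff_distrib sum_subtractf)
  also have "\<dots> = peval f v - peval g v"
    using peval_eq_sum_superset[OF fin, of f v] peval_eq_sum_superset[OF fin, of g v] by simp
  finally show ?thesis .
qed

lemma peval_scale: "peval (\<lambda>m. c * f m) v = c * peval f v" if "is_poly f"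
proof -
  have fin: "finite (psupp f)" using that by (simp add: is_poly_iff_finite_psupp)
  have "peval (\<lambda>m. c * f m) v = (\<Sum>m\<in>psupp f. c * f m * mon_eval m v)"
    by (rule peval_eq_sum_superset[OF fin]) (auto simp: psupp_def)
  thus ?thesis by (simp add: peval_eq_sum_psupp sum_distrib_left mult.assoc)
qed

definition pmult :: "(('n \<Rightarrow> nat) \<Rightarrow> 'k::field) \<Rightarrow> (('n \<Rightarrow> nat) \<Rightarrow> 'k) \<Rightarrow> (('n \<Rightarrow> nat) \<Rightarrow> 'k)" where
  "pmult f g = (\<lambda>m. \<Sum>a\<in>psupp f. \<Sum>b\<in>psupp g. if madd a b = m then f a * g b else 0)"

lemma psupp_pmult: "psupp (pmult f g) \<subseteq> (\<lambda>(a,b). madd a b) ` (psupp f \<times> psupp g)"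
proof
  fix m assume "m \<in> psupp (pmult f g)"
  hence "(\<Sum>a\<in>psupp f. \<Sum>b\<in>psupp g. if madd a b = m then f a * g b else 0) \<noteq> 0"
    by (simp add: psupp_def pmult_def)
  then obtain a where a: "a \<in> psupp f"
    "(\<Sum>b\<in>psupp g. if madd a b = m then f a * g b else 0) \<noteq> 0"
    using sum.not_neutral_contains_not_neutral by blast
  then obtain b where b: "b \<in> psupp g" "(if madd a b = m then f a * g b else 0) \<noteq> 0"
    using sum.not_neutral_contains_not_neutral by blast
  hence "madd a b = m" by (auto split: if_splits)
  thus "m \<in> (\<lambda>(a,b). madd a b) ` (psupp f \<times> psupp g)" using a b by force
qed

lemma is_poly_pmult: "is_poly f \<Longrightarrow> is_poly g \<Longrightarrow> is_poly (pmult f g)"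
  unfolding is_poly_iff_finite_psupp using psupp_pmult finite_subset by blast

lemma peval_pmult:
  assumes "is_poly f" "is_poly g"
  shows "peval (pmult f g) v = peval f v * peval g v"
proof -
  let ?S = "(\<lambda>(a,b). madd a b) ` (psupp f \<times> psupp g)"
  have "finite (psupp f)" "finite (psupp g)" using assms by (auto simp: is_poly_iff_finite_psupp)
  hence fin: "finite ?S" by auto
  have "peval (pmult f g) v = (\<Sum>m\<in>?S. pmult f g m * mon_eval m v)"
    by (rule peval_eq_sum_superset[OF fin psupp_pmult])
  also have "\<dots> = (\<Sum>m\<in>?S. \<Sum>a\<in>psupp f. \<Sum>b\<in>psupp g.
      if madd a b = m then f a * g b * mon_eval m v else 0)"
    unfolding pmult_def sum_distrib_right by (intro sum.cong refl) auto
  also have "\<dots> = (\<Sum>a\<in>psupp f. \<Sum>b\<in>psupp g. \<Sum>m\<in>?S.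
      if madd a b = m then f a * g b * mon_eval m v else 0)"
    by (simp add: sum.swap[of _ ?S] sum.swap[of _ _ "psupp g"])
  also have "\<dots> = (\<Sum>a\<in>psupp f. \<Sum>b\<in>psupp g. f a * g b * mon_eval (madd a b) v)"
  proof (intro sum.cong refl)
    fix a b assume "a \<in> psupp f" "b \<in> psupp g"
    hence "madd a b \<in> ?S" by force
    thus "(\<Sum>m\<in>?S. if madd a b = m then f a * g b * mon_eval m v else 0)
        = f a * g b * mon_eval (madd a b) v"
      using fin by (simp add: sum.delta)
  qed
  also have "\<dots> = (\<Sum>a\<in>psupp f. f a * mon_eval a v) * (\<Sum>b\<in>psupp g. g b * mon_eval b v)"
    by (simp add: sum_product mon_eval_madd mult_ac)
  finally show ?thesis by (simp add: peval_eq_sum_psupp)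
qed

definition homogeneous_deg :: "(('n::finite \<Rightarrow> nat) \<Rightarrow> 'k::field) \<Rightarrow> nat \<Rightarrow> bool" where
  "homogeneous_deg f d \<longleftrightarrow> is_poly f \<and> (\<forall>m. f m \<noteq> 0 \<longrightarrow> mdeg m = d)"

lemma homogeneous_iff_ex_deg: "homogeneous f \<longleftrightarrow> (\<exists>d. homogeneous_deg f d)"
  by (auto simp: homogeneous_def homogeneous_deg_def mdeg_def)

lemma homogeneous_deg_pmult:
  assumes f: "homogeneous_deg f d1" and g: "homogeneous_deg g d2"
  shows "homogeneous_deg (pmult f g) (d1 + d2)"
  unfolding homogeneous_deg_def
proof (intro conjI allI impI)
  show "is_poly (pmult f g)" using f g is_poly_pmult by (auto simp: homogeneous_deg_def)
  fix m assume "pmult f g m \<noteq> 0"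
  then obtain a b where "a \<in> psupp f" "b \<in> psupp g" "m = madd a b"
    using psupp_pmult[of f g] by (auto simp: psupp_def)
  thus "mdeg m = d1 + d2" using f g by (simp add: mdeg_madd psupp_def homogeneous_deg_def)
qed

lemma homogeneous_pmult: "homogeneous f \<Longrightarrow> homogeneous g \<Longrightarrow> homogeneous (pmult f g)"
  using homogeneous_deg_pmult homogeneous_iff_ex_deg by metis

lemma peval_smul_homogeneous:
  assumes "homogeneous_deg f d"
  shows "peval f (smul c v) = c ^ d * peval f v"
proof -
  have "peval f (smul c v) = (\<Sum>m\<in>psupp f. f m * (c ^ mdeg m * mon_eval m v))"
    by (simp add: peval_eq_sum_psupp mon_eval_smul)
  also have "\<dots> = (\<Sum>m\<in>psupp f. c ^ d * (f m * mon_eval m v))"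
    using assms by (intro sum.cong) (auto simp: homogeneous_deg_def psupp_def)
  finally show ?thesis by (simp add: peval_eq_sum_psupp sum_distrib_left)
qed

section \<open>Dickson's lemma\<close>

lemma nat_seq_has_nondecreasing_subseq:
  fixes g :: "nat \<Rightarrow> nat"
  obtains r :: "nat \<Rightarrow> nat" where "strict_mono r" "\<And>i j. i \<le> j \<Longrightarrow> g (r i) \<le> g (r j)"
proof -
  obtain r :: "nat \<Rightarrow> nat" where r: "strict_mono r" "monoseq (\<lambda>n. g (r n))"
    using seq_monosub by blast
  show thesis
  proof (cases "\<forall>m. \<forall>n\<ge>m. g (r m) \<le> g (r n)")
    case True
    show thesis by (rule that[OF r(1)]) (use True in blast)
  next
    case False
    hence dec: "\<And>m n. m \<le> n \<Longrightarrow> g (r n) \<le> g (r m)"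
      using r(2) unfolding monoseq_def by blast
    have fin: "finite (range (\<lambda>n. g (r n)))"
      by (rule finite_subset[of _ "{..g (r 0)}"]) (use dec in auto)
    have "Min (range (\<lambda>n. g (r n))) \<in> range (\<lambda>n. g (r n))" using fin by (intro Min_in) auto
    then obtain N where N: "g (r N) = Min (range (\<lambda>n. g (r n)))" by auto
    have const: "g (r n) = g (r N)" if "N \<le> n" for n
    proof (rule antisym)
      show "g (r n) \<le> g (r N)" using dec[OF that] .
      show "g (r N) \<le> g (r n)" unfolding N using fin by (intro Min_le) auto
    qed
    show thesis
    proof (rule that)
      show "strict_mono (\<lambda>n. r (n + N))" using r(1) by (simp add: strict_mono_def)
      show "g (r (i + N)) \<le> g (r (j + N))" for i j using const[of "i+N"] const[of "j+N"] by simp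
    qed
  qed
qed

lemma dickson_subseq:
  fixes f :: "nat \<Rightarrow> 'a \<Rightarrow> nat"
  assumes "finite S"
  shows "\<exists>r::nat\<Rightarrow>nat. strict_mono r \<and> (\<forall>i j. i \<le> j \<longrightarrow> (\<forall>x\<in>S. f (r i) x \<le> f (r j) x))"
  using assms
proof (induction S rule: finite_induct)
  case empty
  show ?case by (rule exI[of _ id]) (simp add: strict_mono_def)
next
  case (insert a S)
  obtain r :: "nat \<Rightarrow> nat"
    where r: "strict_mono r" "\<And>i j x. i \<le> j \<Longrightarrow> x \<in> S \<Longrightarrow> f (r i) x \<le> f (r j) x"
    using insert.IH by blast
  obtain r' :: "nat \<Rightarrow> nat"
    where r': "strict_mono r'" "\<And>i j. i \<le> j \<Longrightarrow> f (r (r' i)) a \<le> f (r (r' j)) a"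
    using nat_seq_has_nondecreasing_subseq[of "\<lambda>n. f (r n) a"] by blast
  have "f (r (r' i)) x \<le> f (r (r' j)) x" if "i \<le> j" "x \<in> insert a S" for i j x
    using that r(2)[of "r' i" "r' j"] r'(2) strict_mono_less_eq[OF r'(1)] by auto
  moreover have "strict_mono (r \<circ> r')" using r(1) r'(1) by (simp add: strict_mono_def)
  ultimately show ?case by auto
qed

lemma dickson:
  fixes f :: "nat \<Rightarrow> 'n::finite \<Rightarrow> nat"
  obtains i j where "i < j" "\<And>x. f i x \<le> f j x"
proof -
  obtain r :: "nat \<Rightarrow> nat" where r: "strict_mono r" "\<forall>i j. i \<le> j \<longrightarrow> (\<forall>x. f (r i) x \<le> f (r j) x)"
    using dickson_subseq[OF finite_UNIV, of f] by auto
  show thesis by (rule that[of "r 0" "r 1"]) (use r in \<open>auto simp: strict_mono_def\<close>)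
qed

lemma no_strict_chain_of_upward_closed:
  fixes L :: "nat \<Rightarrow> ('n::finite \<Rightarrow> nat) set"
  assumes up: "\<And>k m m'. m \<in> L k \<Longrightarrow> (\<forall>x. m x \<le> m' x) \<Longrightarrow> m' \<in> L k"
  shows "\<not> (\<forall>k. L k \<subset> L (Suc k))"
proof
  assume strict: "\<forall>k. L k \<subset> L (Suc k)"
  hence "\<forall>k. \<exists>m. m \<in> L (Suc k) \<and> m \<notin> L k" by blast
  then obtain m where m: "\<And>k. m k \<in> L (Suc k)" "\<And>k. m k \<notin> L k" by metis
  obtain i j where ij: "i < j" "\<And>x. m i x \<le> m j x" using dickson[of m] by blast
  have "L (Suc i) \<subseteq> L j" by (rule lift_Suc_mono_le[where f=L]) (use strict ij(1) in auto)
  hence "m j \<in> L j" using m(1)[of i] up ij(2) by blast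
  thus False using m(2) by blast
qed

section \<open>Leading monomials and ascending chains of ideals\<close>

definition coord_list :: "'n::finite list" where
  "coord_list = (SOME xs. set xs = UNIV \<and> distinct xs)"

lemma set_coord_list: "set (coord_list :: 'n::finite list) = UNIV"
  using someI_ex[OF finite_distinct_list[OF finite_UNIV[where 'a='n]]]
  unfolding coord_list_def by blast

text \<open>The graded lexicographic monomial order, encoded by comparing these keys in the
  lexicographic order on lists.\<close>
definition mkey :: "('n::finite \<Rightarrow> nat) \<Rightarrow> nat list" where
  "mkey m = mdeg m # map m coord_list"

lemma mkey_inject: "mkey a = mkey b \<Longrightarrow> a = b"
  unfolding mkey_def using set_coord_list by (auto simp: map_eq_conv)

lemma map_madd_less: "map a xs < map b xs \<Longrightarrow> map (madd a c) xs < map (madd b c) xs"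
  by (induction xs) (auto simp: madd_def)

lemma mkey_madd_less: "mkey a < mkey b \<Longrightarrow> mkey (madd a c) < mkey (madd b c)"
  unfolding mkey_def by (auto simp: mdeg_madd map_madd_less)

lemma mkey_madd_le: "mkey a \<le> mkey b \<Longrightarrow> mkey (madd a c) \<le> mkey (madd b c)"
  using mkey_madd_less mkey_inject by (metis order.order_iff_strict)

lemma mdeg_le_of_mkey_less: "mkey a < mkey b \<Longrightarrow> mdeg a \<le> mdeg b"
  unfolding mkey_def by auto

lemma finite_mdeg_le: "finite {m::'n::finite \<Rightarrow> nat. mdeg m \<le> D}"
proof (rule finite_subset)
  have "m x \<le> mdeg m" for m :: "'n \<Rightarrow> nat" and x
    unfolding mdeg_def by (rule member_le_sum) auto
  thus "{m::'n \<Rightarrow> nat. mdeg m \<le> D} \<subseteq> Pi\<^sub>E UNIV (\<lambda>_. {..D})"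
    by (auto simp: PiE_def Pi_def extensional_def intro: le_trans)
qed (simp add: finite_PiE)

lemma wf_mkey_less: "wf {(a::'n::finite \<Rightarrow> nat, b). mkey a < mkey b}"
proof (rule ccontr)
  assume "\<not> ?thesis"
  then obtain f :: "nat \<Rightarrow> 'n \<Rightarrow> nat" where f: "\<And>i. mkey (f (Suc i)) < mkey (f i)"
    unfolding wf_iff_no_infinite_down_chain by auto
  have "mkey (f j) < mkey (f i)" if "i < j" for i j
    using that by (induction j) (auto intro: order.strict_trans f simp: less_Suc_eq)
  hence "inj f" by (metis injI less_irrefl nat_neq_iff)
  moreover have "mdeg (f i) \<le> mdeg (f 0)" for i
    by (induction i) (use f mdeg_le_of_mkey_less le_trans in blast)+
  hence "range f \<subseteq> {m. mdeg m \<le> mdeg (f 0)}" by auto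
  ultimately show False using finite_mdeg_le finite_subset finite_imageD infinite_UNIV_nat by metis
qed

definition LM :: "(('n::finite \<Rightarrow> nat) \<Rightarrow> 'k::field) \<Rightarrow> ('n \<Rightarrow> nat)" where
  "LM f = inv_into (psupp f) mkey (Max (mkey ` psupp f))"

lemma
  assumes "finite (psupp f)" "f \<noteq> (\<lambda>_. 0)"
  shows LM_in_psupp: "LM f \<in> psupp f"
    and mkey_le_LM: "m \<in> psupp f \<Longrightarrow> mkey m \<le> mkey (LM f)"
proof -
  have ne: "psupp f \<noteq> {}" using assms(2) psupp_eq_empty_iff by blast
  have M: "Max (mkey ` psupp f) \<in> mkey ` psupp f" using assms(1) ne by simp
  show "LM f \<in> psupp f" unfolding LM_def using M by (rule inv_into_into)
  have "mkey (LM f) = Max (mkey ` psupp f)" unfolding LM_def using M by (rule f_inv_into_f)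
  thus "m \<in> psupp f \<Longrightarrow> mkey m \<le> mkey (LM f)" using assms(1) by simp
qed

lemma LM_eqI:
  assumes "finite (psupp f)" "m \<in> psupp f" "\<And>m'. m' \<in> psupp f \<Longrightarrow> mkey m' \<le> mkey m"
  shows "LM f = m"
proof -
  have nz: "f \<noteq> (\<lambda>_. 0)" using assms(2) psupp_eq_empty_iff by blast
  have "mkey (LM f) \<le> mkey m" using assms(3) LM_in_psupp[OF assms(1) nz] by blast
  moreover have "mkey m \<le> mkey (LM f)" using mkey_le_LM[OF assms(1) nz assms(2)] .
  ultimately show ?thesis using mkey_inject by (metis order_antisym)
qed

definition pmult_monom :: "('n \<Rightarrow> nat) \<Rightarrow> (('n \<Rightarrow> nat) \<Rightarrow> 'k::field) \<Rightarrow> (('n \<Rightarrow> nat) \<Rightarrow> 'k)" where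
  "pmult_monom a f = (\<lambda>m. if (\<forall>i. a i \<le> m i) then f (\<lambda>i. m i - a i) else 0)"

lemma psupp_pmult_monom: "psupp (pmult_monom a f) = madd a ` psupp f"
proof safe
  fix m assume "m \<in> psupp (pmult_monom a f)"
  hence m: "\<forall>i. a i \<le> m i" "f (\<lambda>i. m i - a i) \<noteq> 0"
    by (auto simp: psupp_def pmult_monom_def split: if_splits)
  have "m = madd a (\<lambda>i. m i - a i)" using m(1) by (auto simp: madd_def)
  thus "m \<in> madd a ` psupp f" using m(2) by (auto simp: psupp_def)
qed (simp add: psupp_def pmult_monom_def madd_def)

lemma peval_pmult_monom: "peval (pmult_monom a f) v = mon_eval a v * peval f v"
proof -
  have inj: "inj_on (madd a) (psupp f)" by (rule inj_onI) (auto simp: madd_def fun_eq_iff)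
  have "peval (pmult_monom a f) v = (\<Sum>m\<in>madd a ` psupp f. pmult_monom a f m * mon_eval m v)"
    by (simp add: peval_eq_sum_psupp psupp_pmult_monom)
  also have "\<dots> = (\<Sum>m\<in>psupp f. pmult_monom a f (madd a m) * mon_eval (madd a m) v)"
    by (rule sum.reindex[OF inj, unfolded comp_def])
  also have "\<dots> = (\<Sum>m\<in>psupp f. mon_eval a v * (f m * mon_eval m v))"
    by (simp add: pmult_monom_def madd_def mon_eval_madd[unfolded madd_def] mult_ac)
  finally show ?thesis by (simp add: peval_eq_sum_psupp sum_distrib_left)
qed

lemma LM_pmult_monom:
  assumes "finite (psupp f)" "f \<noteq> (\<lambda>_. 0)"
  shows "LM (pmult_monom a f) = madd a (LM f)"
proof (rule LM_eqI)
  show "finite (psupp (pmult_monom a f))" using assms by (simp add: psupp_pmult_monom)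
  show "madd a (LM f) \<in> psupp (pmult_monom a f)" using LM_in_psupp[OF assms] by (simp add: psupp_pmult_monom)
  fix m' assume "m' \<in> psupp (pmult_monom a f)"
  then obtain m where "m \<in> psupp f" "m' = madd a m" by (auto simp: psupp_pmult_monom)
  thus "mkey m' \<le> mkey (madd a (LM f))"
    using mkey_le_LM[OF assms] mkey_madd_le madd_commute by metis
qed

definition poly_ideal :: "(('n::finite \<Rightarrow> nat) \<Rightarrow> 'k::field) set \<Rightarrow> bool" where
  "poly_ideal I \<longleftrightarrow> (\<forall>f\<in>I. is_poly f) \<and> (\<lambda>_. 0) \<in> I \<and> (\<forall>f\<in>I. \<forall>g\<in>I. (\<lambda>m. f m - g m) \<in> I)
     \<and> (\<forall>f\<in>I. \<forall>c. (\<lambda>m. c * f m) \<in> I) \<and> (\<forall>f\<in>I. \<forall>a. pmult_monom a f \<in> I)"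

lemma poly_ideal_add:
  assumes I: "poly_ideal I" and f: "f \<in> I" and g: "g \<in> I"
  shows "(\<lambda>m. f m + g m) \<in> I"
proof -
  have "\<forall>c. (\<lambda>m. c * g m) \<in> I" using I g by (simp add: poly_ideal_def)
  hence "(\<lambda>m. (-1) * g m) \<in> I" by (rule spec)
  moreover have "\<forall>h\<in>I. (\<lambda>m. f m - h m) \<in> I" using I f by (simp add: poly_ideal_def)
  ultimately have "(\<lambda>m. f m - (-1) * g m) \<in> I" by (rule bspec[rotated])
  thus ?thesis by simp
qed

definition LMs :: "(('n::finite \<Rightarrow> nat) \<Rightarrow> 'k::field) set \<Rightarrow> ('n \<Rightarrow> nat) set" where
  "LMs I = {LM f | f. f \<in> I \<and> f \<noteq> (\<lambda>_. 0)}"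

lemma LMs_upward_closed:
  assumes I: "poly_ideal I" and m: "m \<in> LMs I" and le: "\<forall>x. m x \<le> m' x"
  shows "m' \<in> LMs I"
proof -
  obtain f where f: "f \<in> I" "f \<noteq> (\<lambda>_. 0)" "m = LM f" using m by (auto simp: LMs_def)
  have fin: "finite (psupp f)" using I f by (simp add: poly_ideal_def is_poly_iff_finite_psupp)
  define a where "a i = m' i - m i" for i
  have "pmult_monom a f \<in> I" using I f by (simp add: poly_ideal_def)
  moreover have "pmult_monom a f \<noteq> (\<lambda>_. 0)"
    using f(2) by (simp flip: psupp_eq_empty_iff add: psupp_pmult_monom)
  moreover have "LM (pmult_monom a f) = m'"
    using LM_pmult_monom[OF fin f(2)] f(3) le by (auto simp: a_def madd_def fun_eq_iff)
  ultimately show ?thesis unfolding LMs_def by blast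
qed

lemma mkey_LM_cancel_less:
  fixes f g :: "('n::finite \<Rightarrow> nat) \<Rightarrow> 'k::field"
  defines "h \<equiv> (\<lambda>m. g m - g (LM g) / f (LM f) * f m)"
  assumes fin: "finite (psupp f)" "finite (psupp g)" and nz: "f \<noteq> (\<lambda>_. 0)" "g \<noteq> (\<lambda>_. 0)"
    and LM: "LM f = LM g" and h: "h \<noteq> (\<lambda>_. 0)"
  shows "mkey (LM h) < mkey (LM g)"
proof -
  have h0: "h (LM g) = 0"
    using LM_in_psupp[OF fin(1) nz(1)] LM by (simp add: h_def psupp_def)
  have suph: "psupp h \<subseteq> psupp g \<union> psupp f" by (auto simp: h_def psupp_def)
  hence finH: "finite (psupp h)" using fin finite_subset by blast
  have LMh: "LM h \<noteq> LM g" "LM h \<in> psupp g \<union> psupp f"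
    using LM_in_psupp[OF finH h] h0 suph by (auto simp: psupp_def)
  hence "mkey (LM h) \<le> mkey (LM g)"
    using mkey_le_LM[OF fin(2) nz(2)] mkey_le_LM[OF fin(1) nz(1)] LM by auto
  thus ?thesis using LMh(1) mkey_inject by (metis order.order_iff_strict)
qed

text \<open>Cancelling the leading term of \<open>g \<in> J\<close> against an \<open>f \<in> I\<close> with the same leading
  monomial strictly lowers the leading monomial; induct along the well-founded order.\<close>
lemma poly_ideal_subset_of_LMs_subset:
  assumes I: "poly_ideal I" and J: "poly_ideal J" and sub: "I \<subseteq> J" and L: "LMs J \<subseteq> LMs I"
  shows "J \<subseteq> I"
proof
  fix g assume "g \<in> J"
  thus "g \<in> I"
  proof (induction "LM g" arbitrary: g rule: wf_induct_rule[OF wf_mkey_less])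
    case (1 g)
    show ?case
    proof (cases "g = (\<lambda>_. 0)")
      case True thus ?thesis using I by (simp add: poly_ideal_def)
    next
      case g0: False
      have "LM g \<in> LMs J" using 1(2) g0 by (auto simp: LMs_def)
      then obtain f where f: "f \<in> I" "f \<noteq> (\<lambda>_. 0)" "LM f = LM g" using L by (auto simp: LMs_def)
      define c where "c = g (LM g) / f (LM f)"
      define h where "h = (\<lambda>m. g m - c * f m)"
      have cfI: "(\<lambda>m. c * f m) \<in> I" using I f by (simp add: poly_ideal_def)
      have hJ: "h \<in> J" unfolding h_def using J f(1) sub 1(2) by (simp add: poly_ideal_def subsetD)
      have "h \<in> I"
      proof (cases "h = (\<lambda>_. 0)")
        case True thus ?thesis using I by (simp add: poly_ideal_def)
      next
        case False
        have "finite (psupp f)" "finite (psupp g)"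
          using I J f(1) 1(2) by (auto simp: poly_ideal_def is_poly_iff_finite_psupp)
        hence "mkey (LM h) < mkey (LM g)"
          using mkey_LM_cancel_less[of f g] f(2,3) g0 False by (simp add: h_def c_def)
        thus ?thesis using 1(1) hJ by blast
      qed
      moreover have "g = (\<lambda>m. h m + c * f m)" by (simp add: h_def)
      ultimately show ?thesis using poly_ideal_add[OF I _ cfI] by metis
    qed
  qed
qed

lemma poly_ideal_no_strict_chain:
  fixes I :: "nat \<Rightarrow> (('n::finite \<Rightarrow> nat) \<Rightarrow> 'k::field) set"
  assumes "\<And>k. poly_ideal (I k)"
  shows "\<not> (\<forall>k. I k \<subset> I (Suc k))"
proof
  assume strict: "\<forall>k. I k \<subset> I (Suc k)"
  have mono: "LMs (I k) \<subseteq> LMs (I (Suc k))" for k using strict unfolding LMs_def by blast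
  have "\<not> (\<forall>k. LMs (I k) \<subset> LMs (I (Suc k)))"
    using LMs_upward_closed assms by (intro no_strict_chain_of_upward_closed) blast
  then obtain k where "LMs (I (Suc k)) \<subseteq> LMs (I k)" using mono by blast
  hence "I (Suc k) \<subseteq> I k" using poly_ideal_subset_of_LMs_subset assms strict by blast
  thus False using strict by blast
qed

section \<open>The Zariski topology on \<open>P(V)\<close>\<close>

lemma smul_smul: "smul c (smul d v) = smul (c * d) v"
  by (simp add: smul_def fun_eq_iff mult.assoc)

lemma smul_one: "smul 1 v = v"
  by (simp add: smul_def)

lemma proj_pt_self: "v \<in> proj_pt v"
  unfolding proj_pt_def mem_Collect_eq by (rule exI[of _ 1]) (simp add: smul_one)

lemma PV_E:
  assumes "p \<in> PV"
  obtains v where "v \<noteq> (\<lambda>_. 0)" "p = proj_pt v"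
  using assms unfolding PV_def by blast

lemma proj_pt_in_PV: "v \<noteq> (\<lambda>_. 0) \<Longrightarrow> proj_pt v \<in> PV"
  unfolding PV_def by blast

lemma proj_pt_smul:
  assumes c: "c \<noteq> 0"
  shows "proj_pt (smul c v) = proj_pt v"
proof (rule set_eqI)
  fix u
  show "u \<in> proj_pt (smul c v) \<longleftrightarrow> u \<in> proj_pt v"
  proof
    assume "u \<in> proj_pt (smul c v)"
    then obtain d where "d \<noteq> 0" "u = smul d (smul c v)" by (auto simp: proj_pt_def)
    thus "u \<in> proj_pt v" using c by (auto simp: proj_pt_def smul_smul)
  next
    assume "u \<in> proj_pt v"
    then obtain d where d: "d \<noteq> 0" "u = smul d v" by (auto simp: proj_pt_def)
    hence "u = smul (d / c) (smul c v)" using c by (simp add: smul_smul)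
    thus "u \<in> proj_pt (smul c v)" using c d by (auto simp: proj_pt_def)
  qed
qed

definition vanish :: "(('n::finite \<Rightarrow> nat) \<Rightarrow> 'k::field) set \<Rightarrow> ('n \<Rightarrow> 'k) set set" where
  "vanish F = {p \<in> PV. \<forall>f\<in>F. \<forall>v\<in>p. peval f v = 0}"

lemma proj_closed_iff_vanish:
  "proj_closed Z \<longleftrightarrow> (\<exists>F. (\<forall>f\<in>F. homogeneous f) \<and> Z = vanish F)"
  by (simp add: proj_closed_def vanish_def)

lemma homogeneous_vanishes_on_proj_pt:
  assumes "homogeneous f"
  shows "(\<forall>u\<in>proj_pt v. peval f u = 0) \<longleftrightarrow> peval f v = 0"
proof -
  obtain d where d: "homogeneous_deg f d" using assms homogeneous_iff_ex_deg by blast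
  show ?thesis
    using proj_pt_self[of v] by (auto simp: proj_pt_def peval_smul_homogeneous[OF d])
qed

lemma proj_pt_in_vanish_iff:
  assumes "\<forall>f\<in>F. homogeneous f" "v \<noteq> (\<lambda>_. 0)"
  shows "proj_pt v \<in> vanish F \<longleftrightarrow> (\<forall>f\<in>F. peval f v = 0)"
  using assms homogeneous_vanishes_on_proj_pt proj_pt_in_PV unfolding vanish_def by blast

lemma proj_closed_subset_PV: "proj_closed Z \<Longrightarrow> Z \<subseteq> PV"
  by (auto simp: proj_closed_def)

lemma proj_closed_PV: "proj_closed PV"
  unfolding proj_closed_def by (rule exI[of _ "{}"]) auto

definition unit_exp :: "'n \<Rightarrow> ('n \<Rightarrow> nat)" where
  "unit_exp j = (\<lambda>i. if i = j then 1 else 0)"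

definition coord_poly :: "'n::finite \<Rightarrow> (('n \<Rightarrow> nat) \<Rightarrow> 'k::field)" where
  "coord_poly j = (\<lambda>m. if m = unit_exp j then 1 else 0)"

lemma psupp_coord_poly: "psupp (coord_poly j) = {unit_exp j}"
  by (auto simp: psupp_def coord_poly_def)

lemma peval_coord_poly: "peval (coord_poly j) v = v j"
proof -
  have "peval (coord_poly j) v = mon_eval (unit_exp j) v"
    unfolding peval_eq_sum_psupp psupp_coord_poly by (simp add: coord_poly_def)
  also have "\<dots> = (\<Prod>i\<in>UNIV. if i = j then v i else 1)"
    unfolding mon_eval_def unit_exp_def by (intro prod.cong) auto
  finally show ?thesis by (simp add: prod.delta)
qed

lemma homogeneous_coord_poly: "homogeneous (coord_poly j)"
proof -
  have "homogeneous_deg (coord_poly j) 1"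
    unfolding homogeneous_deg_def is_poly_iff_finite_psupp psupp_coord_poly
    by (auto simp: coord_poly_def mdeg_def unit_exp_def)
  thus ?thesis using homogeneous_iff_ex_deg by blast
qed

lemma proj_closed_empty: "proj_closed ({} :: ('n::finite \<Rightarrow> 'k::field) set set)"
proof -
  let ?F = "range coord_poly :: (('n \<Rightarrow> nat) \<Rightarrow> 'k) set"
  have hom: "\<forall>f\<in>?F. homogeneous f" using homogeneous_coord_poly by blast
  have "vanish ?F = {}"
  proof (rule equals0I)
    fix p assume p: "p \<in> vanish ?F"
    then obtain v where v: "v \<noteq> (\<lambda>_. 0)" "p = proj_pt v" by (auto simp: vanish_def elim: PV_E)
    hence "\<forall>j. v j = 0" using proj_pt_in_vanish_iff[OF hom v(1)] p by (simp add: peval_coord_poly)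
    thus False using v(1) by auto
  qed
  thus ?thesis unfolding proj_closed_iff_vanish using hom by metis
qed

lemma proj_closed_Inter:
  fixes \<Z> :: "('n::finite \<Rightarrow> 'k::field) set set set"
  assumes "\<Z> \<noteq> {}" "\<forall>Z\<in>\<Z>. proj_closed Z"
  shows "proj_closed (\<Inter>\<Z>)"
proof -
  obtain F where F: "\<forall>Z\<in>\<Z>. (\<forall>f\<in>F Z. homogeneous f) \<and> Z = vanish (F Z)"
    using assms(2) proj_closed_iff_vanish by metis
  have "p \<in> \<Inter>\<Z> \<longleftrightarrow> p \<in> vanish (\<Union>Z\<in>\<Z>. F Z)" for p
  proof -
    have "p \<in> \<Inter>\<Z> \<longleftrightarrow> (\<forall>Z\<in>\<Z>. p \<in> vanish (F Z))" using F by auto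
    also have "\<dots> \<longleftrightarrow> p \<in> vanish (\<Union>Z\<in>\<Z>. F Z)" using assms(1) by (auto simp: vanish_def)
    finally show ?thesis .
  qed
  moreover have "\<forall>f\<in>(\<Union>Z\<in>\<Z>. F Z). homogeneous f" using F by blast
  ultimately show ?thesis unfolding proj_closed_iff_vanish by blast
qed

lemma proj_closed_Int: "proj_closed A \<Longrightarrow> proj_closed B \<Longrightarrow> proj_closed (A \<inter> B)"
  using proj_closed_Inter[of "{A, B}"] by simp

text \<open>The union is cut out by the pairwise products of the defining equations.\<close>
lemma proj_closed_Un:
  fixes A :: "('n::finite \<Rightarrow> 'k::field) set set"
  assumes "proj_closed A" "proj_closed B"
  shows "proj_closed (A \<union> B)"
proof -
  obtain F where F: "\<forall>f\<in>F. homogeneous f" "A = vanish F" using assms(1) proj_closed_iff_vanish by blast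
  obtain G where G: "\<forall>g\<in>G. homogeneous g" "B = vanish G" using assms(2) proj_closed_iff_vanish by blast
  let ?H = "{pmult f g | f g. f \<in> F \<and> g \<in> G}"
  have H: "\<forall>h\<in>?H. homogeneous h" using F G homogeneous_pmult by blast
  have "p \<in> A \<union> B \<longleftrightarrow> p \<in> vanish ?H" for p
  proof (cases "p \<in> PV")
    case False thus ?thesis using F G by (auto simp: vanish_def)
  next
    case True
    then obtain v where v: "v \<noteq> (\<lambda>_. 0)" "p = proj_pt v" by (rule PV_E)
    have ev: "peval (pmult f g) v = peval f v * peval g v" if "f \<in> F" "g \<in> G" for f g
      using that F G by (intro peval_pmult) (auto simp: homogeneous_def)
    have "p \<in> vanish ?H \<longleftrightarrow> (\<forall>h\<in>?H. peval h v = 0)"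
      using proj_pt_in_vanish_iff[OF H v(1)] v(2) by simp
    also have "\<dots> \<longleftrightarrow> (\<forall>f\<in>F. \<forall>g\<in>G. peval (pmult f g) v = 0)" by blast
    also have "\<dots> \<longleftrightarrow> (\<forall>f\<in>F. \<forall>g\<in>G. peval f v * peval g v = 0)" using ev by simp
    also have "\<dots> \<longleftrightarrow> (\<forall>f\<in>F. peval f v = 0) \<or> (\<forall>g\<in>G. peval g v = 0)"
      by (metis mult_eq_0_iff)
    also have "\<dots> \<longleftrightarrow> p \<in> A \<union> B"
      using proj_pt_in_vanish_iff[OF F(1) v(1)] proj_pt_in_vanish_iff[OF G(1) v(1)] F(2) G(2) v(2)
      by simp
    finally show ?thesis by simp
  qed
  thus ?thesis unfolding proj_closed_iff_vanish using H by blast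
qed

lemma proj_closed_finite_Union:
  "finite K \<Longrightarrow> \<forall>Z\<in>K. proj_closed (Z :: ('n::finite \<Rightarrow> 'k::field) set set) \<Longrightarrow> proj_closed (\<Union>K)"
  by (induction K rule: finite_induct) (auto simp: proj_closed_empty proj_closed_Un)

lemma pclosure_subset: "A \<subseteq> pclosure A"
  by (auto simp: pclosure_def)

lemma pclosure_minimal: "proj_closed Z \<Longrightarrow> A \<subseteq> Z \<Longrightarrow> pclosure A \<subseteq> Z"
  by (auto simp: pclosure_def)

lemma pclosure_mono: "A \<subseteq> B \<Longrightarrow> pclosure A \<subseteq> pclosure B"
  by (auto simp: pclosure_def)

lemma proj_closed_pclosure: "A \<subseteq> PV \<Longrightarrow> proj_closed (pclosure A)"
  unfolding pclosure_def by (rule proj_closed_Inter) (use proj_closed_PV in auto)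

lemma pclosure_empty: "pclosure {} = ({} :: ('n::finite \<Rightarrow> 'k::field) set set)"
  using pclosure_minimal[OF proj_closed_empty, of "{}"] by auto

lemma pclosure_UN_finite:
  fixes A :: "'c \<Rightarrow> ('n::finite \<Rightarrow> 'k::field) set set"
  assumes "finite K" "\<forall>C\<in>K. A C \<subseteq> PV"
  shows "pclosure (\<Union>C\<in>K. A C) = (\<Union>C\<in>K. pclosure (A C))"
proof
  show "(\<Union>C\<in>K. pclosure (A C)) \<subseteq> pclosure (\<Union>C\<in>K. A C)"
    by (intro UN_least pclosure_mono) auto
  have "proj_closed (\<Union>C\<in>K. pclosure (A C))"
    using assms by (intro proj_closed_finite_Union) (auto intro: proj_closed_pclosure)
  thus "pclosure (\<Union>C\<in>K. A C) \<subseteq> (\<Union>C\<in>K. pclosure (A C))"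
    by (rule pclosure_minimal) (use pclosure_subset in blast)
qed

section \<open>Noetherianity and irreducible components\<close>

definition vanishing_ideal :: "('n::finite \<Rightarrow> 'k::field) set set \<Rightarrow> (('n \<Rightarrow> nat) \<Rightarrow> 'k) set" where
  "vanishing_ideal Z = {f. is_poly f \<and> (\<forall>p\<in>Z. \<forall>v\<in>p. peval f v = 0)}"

lemma poly_ideal_vanishing_ideal: "poly_ideal (vanishing_ideal Z)"
  unfolding poly_ideal_def
proof (intro conjI ballI allI)
  show "is_poly f" if "f \<in> vanishing_ideal Z" for f using that by (simp add: vanishing_ideal_def)
  show "(\<lambda>_. 0) \<in> vanishing_ideal Z" by (simp add: vanishing_ideal_def is_poly_def peval_def)
  fix f assume f: "f \<in> vanishing_ideal Z"
  hence fp: "is_poly f" by (simp add: vanishing_ideal_def)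
  show "(\<lambda>m. f m - g m) \<in> vanishing_ideal Z" if g: "g \<in> vanishing_ideal Z" for g
  proof -
    have gp: "is_poly g" using g by (simp add: vanishing_ideal_def)
    have "is_poly (\<lambda>m. f m - g m)"
      using fp gp unfolding is_poly_iff_finite_psupp
      by (rule_tac finite_subset[of _ "psupp f \<union> psupp g"]) (auto simp: psupp_def)
    thus ?thesis using f g by (auto simp: vanishing_ideal_def peval_diff[OF fp gp])
  qed
  show "(\<lambda>m. c * f m) \<in> vanishing_ideal Z" for c
  proof -
    have "is_poly (\<lambda>m. c * f m)"
      using fp unfolding is_poly_iff_finite_psupp
      by (rule_tac finite_subset[of _ "psupp f"]) (auto simp: psupp_def)
    thus ?thesis using f by (auto simp: vanishing_ideal_def peval_scale[OF fp])
  qed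
  show "pmult_monom a f \<in> vanishing_ideal Z" for a
  proof -
    have "is_poly (pmult_monom a f)" using fp by (simp add: is_poly_iff_finite_psupp psupp_pmult_monom)
    thus ?thesis using f by (auto simp: vanishing_ideal_def peval_pmult_monom)
  qed
qed

text \<open>A strictly descending chain of closed sets would give a strictly ascending chain of
  vanishing ideals, since a closed set is cut out by the polynomials vanishing on it.\<close>
lemma wf_proj_closed_psubset:
  "wf {(A :: ('n::finite \<Rightarrow> 'k::field) set set, B). proj_closed A \<and> proj_closed B \<and> A \<subset> B}"
proof (rule ccontr)
  assume "\<not> ?thesis"
  then obtain Z :: "nat \<Rightarrow> ('n \<Rightarrow> 'k) set set"
    where "\<forall>i. proj_closed (Z i) \<and> proj_closed (Z (Suc i)) \<and> Z (Suc i) \<subset> Z i"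
    unfolding wf_iff_no_infinite_down_chain by auto
  hence Z: "\<And>i. proj_closed (Z i)" "\<And>i. Z (Suc i) \<subset> Z i" by auto
  have "vanishing_ideal (Z k) \<subset> vanishing_ideal (Z (Suc k))" for k
  proof -
    obtain F where F: "\<forall>f\<in>F. homogeneous f" "Z (Suc k) = vanish F"
      using Z(1) proj_closed_iff_vanish by blast
    have "F \<subseteq> vanishing_ideal (Z (Suc k))"
      using F unfolding vanishing_ideal_def homogeneous_def vanish_def by blast
    moreover have "\<not> F \<subseteq> vanishing_ideal (Z k)"
    proof
      assume "F \<subseteq> vanishing_ideal (Z k)"
      hence "Z k \<subseteq> vanish F"
        using proj_closed_subset_PV[OF Z(1)[of k]] by (auto simp: vanishing_ideal_def vanish_def)
      thus False using F(2) Z(2)[of k] by blast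
    qed
    moreover have "vanishing_ideal (Z k) \<subseteq> vanishing_ideal (Z (Suc k))"
      using Z(2) unfolding vanishing_ideal_def by blast
    ultimately show ?thesis by blast
  qed
  thus False
    using poly_ideal_no_strict_chain[of "\<lambda>i. vanishing_ideal (Z i)"] poly_ideal_vanishing_ideal
    by blast
qed

lemma proj_closed_irreducible_decomposition:
  fixes Z :: "('n::finite \<Rightarrow> 'k::field) set set"
  assumes "proj_closed Z"
  obtains D where "finite D" "\<forall>d\<in>D. proj_irreducible d" "\<Union>D = Z"
proof -
  have "\<exists>D. finite D \<and> (\<forall>d\<in>D. proj_irreducible d) \<and> \<Union>D = Z"
    using assms
  proof (induction Z rule: wf_induct_rule[OF wf_proj_closed_psubset])
    case (1 Z)
    show ?case
    proof (cases "Z = {} \<or> proj_irreducible Z")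
      case True thus ?thesis by (auto intro: exI[of _ "{}"] exI[of _ "{Z}"])
    next
      case False
      then obtain A B where AB: "proj_closed A" "proj_closed B" "Z = A \<union> B" "A \<subset> Z" "B \<subset> Z"
        using 1(2) unfolding proj_irreducible_def by blast
      obtain DA DB where "finite DA" "\<forall>d\<in>DA. proj_irreducible d" "\<Union>DA = A"
        "finite DB" "\<forall>d\<in>DB. proj_irreducible d" "\<Union>DB = B"
        using 1(1)[of A] 1(1)[of B] AB 1(2) by blast
      thus ?thesis using AB(3) by (intro exI[of _ "DA \<union> DB"]) auto
    qed
  qed
  thus thesis using that by blast
qed

lemma proj_irreducible_subset_Union:
  fixes E :: "('n::finite \<Rightarrow> 'k::field) set set"
  assumes E: "proj_irreducible E"
  shows "finite K \<Longrightarrow> \<forall>Z\<in>K. proj_closed Z \<Longrightarrow> E \<subseteq> \<Union>K \<Longrightarrow> \<exists>Z\<in>K. E \<subseteq> Z"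
proof (induction K rule: finite_induct)
  case empty thus ?case using E by (auto simp: proj_irreducible_def)
next
  case (insert Z K)
  have "proj_closed (E \<inter> Z)" "proj_closed (E \<inter> \<Union>K)"
    using E insert by (auto simp: proj_irreducible_def intro: proj_closed_Int proj_closed_finite_Union)
  moreover have "E = (E \<inter> Z) \<union> (E \<inter> \<Union>K)" using insert.prems by blast
  ultimately have "E \<subseteq> Z \<or> E \<subseteq> \<Union>K" using E unfolding proj_irreducible_def by blast
  thus ?case using insert by blast
qed

lemma irr_component_closed: "C \<in> irr_components X \<Longrightarrow> proj_closed C"
  by (simp add: irr_components_def proj_irreducible_def)

lemma irr_component_subset: "C \<in> irr_components X \<Longrightarrow> C \<subseteq> X"
  by (simp add: irr_components_def)

lemma irr_components_subset_decomposition: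
  assumes D: "finite D" "\<forall>d\<in>D. proj_irreducible d" "\<Union>D = X"
  shows "irr_components X \<subseteq> D"
proof
  fix C assume C: "C \<in> irr_components X"
  have "\<forall>d\<in>D. proj_closed d" using D(2) by (simp add: proj_irreducible_def)
  moreover have "proj_irreducible C" "C \<subseteq> \<Union>D" using C D(3) by (auto simp: irr_components_def)
  ultimately obtain d where d: "d \<in> D" "C \<subseteq> d"
    using proj_irreducible_subset_Union[of C D] D(1) by blast
  have "d \<subseteq> X" "proj_irreducible d" using d(1) D(2,3) by auto
  hence "d = C" using C d(2) unfolding irr_components_def by blast
  thus "C \<in> D" using d(1) by simp
qed

text \<open>A maximal member of the finite family of pieces of a decomposition containing \<open>E\<close>
  is a component.\<close>
lemma exists_irr_component_superset:
  assumes X: "proj_closed X" and E: "proj_irreducible E" "E \<subseteq> X"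
  shows "\<exists>C\<in>irr_components X. E \<subseteq> C"
proof -
  obtain D where D: "finite D" "\<forall>d\<in>D. proj_irreducible d" "\<Union>D = X"
    using proj_closed_irreducible_decomposition[OF X] by blast
  have Dc: "\<forall>d\<in>D. proj_closed d" using D(2) by (simp add: proj_irreducible_def)
  have above: "\<exists>d\<in>D. F \<subseteq> d" if "proj_irreducible F" "F \<subseteq> X" for F
    using proj_irreducible_subset_Union[OF that(1) D(1) Dc] that(2) D(3) by blast
  define M where "M = {d \<in> D. E \<subseteq> d}"
  have "finite M" "M \<noteq> {}" using D(1) above[OF E] by (auto simp: M_def)
  then obtain d where dM: "d \<in> M" and dmax: "\<forall>b\<in>M. d \<le> b \<longrightarrow> d = b"
    using finite_has_maximal by blast
  have "d \<in> irr_components X"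
    unfolding irr_components_def mem_Collect_eq
  proof (intro conjI allI impI)
    show "d \<subseteq> X" "proj_irreducible d" using dM D(2,3) by (auto simp: M_def)
    fix F assume F: "F \<subseteq> X" "proj_irreducible F" "d \<subseteq> F"
    then obtain d' where d': "d' \<in> D" "F \<subseteq> d'" using above by blast
    have "d' \<in> M" using d' dM F(3) by (auto simp: M_def)
    hence "d = d'" using dmax F(3) d'(2) by blast
    thus "F = d" using d'(2) F(3) by blast
  qed
  thus ?thesis using dM by (auto simp: M_def)
qed

lemma
  fixes X :: "('n::finite \<Rightarrow> 'k::field) set set"
  assumes "proj_closed X"
  shows finite_irr_components: "finite (irr_components X)"
    and Union_irr_components: "\<Union>(irr_components X) = X"
proof -
  obtain D where D: "finite D" "\<forall>d\<in>D. proj_irreducible d" "\<Union>D = X"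
    using proj_closed_irreducible_decomposition[OF assms] by blast
  show "finite (irr_components X)"
    using irr_components_subset_decomposition[OF D] D(1) finite_subset by blast
  have "x \<in> \<Union>(irr_components X)" if x: "x \<in> X" for x
  proof -
    obtain d where "d \<in> D" "x \<in> d" using x D(3) by blast
    moreover have "d \<subseteq> X" using \<open>d \<in> D\<close> D(3) by blast
    moreover have "proj_irreducible d" using \<open>d \<in> D\<close> D(2) by blast
    ultimately obtain C where "C \<in> irr_components X" "d \<subseteq> C"
      using exists_irr_component_superset[OF assms] by blast
    thus ?thesis using \<open>x \<in> d\<close> by blast
  qed
  thus "\<Union>(irr_components X) = X" using irr_component_subset by blast
qed

section \<open>The torus action\<close>

definition tchar :: "('n \<Rightarrow> 'r::finite \<Rightarrow> int) \<Rightarrow> ('r \<Rightarrow> 'k::field) \<Rightarrow> 'n \<Rightarrow> 'k" where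
  "tchar w t j = (\<Prod>a\<in>UNIV. t a powi w j a)"

definition tinv :: "('r \<Rightarrow> 'k::field) \<Rightarrow> ('r \<Rightarrow> 'k)" where
  "tinv t = (\<lambda>a. inverse (t a))"

lemma tact_eq_tchar: "tact w t v = (\<lambda>j. tchar w t j * v j)"
  by (simp add: tact_def tchar_def)

lemma tchar_nonzero: "t \<in> torus \<Longrightarrow> tchar w t j \<noteq> 0"
  unfolding tchar_def torus_def by (simp add: prod_zero_iff power_int_not_zero)

lemma tchar_tinv: "tchar w (tinv t) j = inverse (tchar w t j)"
  unfolding tchar_def tinv_def
  using prod_inversef[of "\<lambda>a. t a powi w j a" UNIV, unfolded comp_def]
  by (simp add: power_int_inverse)

lemma tchar_mult: "tchar w (\<lambda>a. s a * s' a) j = tchar w s j * tchar w s' j"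
  unfolding tchar_def by (simp add: power_int_mult_distrib prod.distrib)

lemma tinv_in_torus: "t \<in> torus \<Longrightarrow> tinv t \<in> torus"
  by (simp add: torus_def tinv_def)

lemma tinv_tinv: "tinv (tinv t) = t"
  by (simp add: tinv_def)

lemma tact_tinv: "t \<in> torus \<Longrightarrow> tact w (tinv t) (tact w t v) = v"
  by (simp add: tact_eq_tchar tchar_tinv tchar_nonzero fun_eq_iff)

lemma tact_mult: "tact w (\<lambda>a. s a * s' a) v = tact w s (tact w s' v)"
  by (simp add: tact_eq_tchar tchar_mult fun_eq_iff mult.assoc)

lemma tact_smul: "tact w t (smul c v) = smul c (tact w t v)"
  by (simp add: tact_eq_tchar smul_def fun_eq_iff mult_ac)

lemma tact_nonzero: "t \<in> torus \<Longrightarrow> v \<noteq> (\<lambda>_. 0) \<Longrightarrow> tact w t v \<noteq> (\<lambda>_. 0)"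
  by (auto simp: tact_eq_tchar fun_eq_iff tchar_nonzero)

lemma pact_proj_pt: "pact w t (proj_pt v) = proj_pt (tact w t v)"
proof -
  have "pact w t (proj_pt v) = (\<lambda>c. tact w t (smul c v)) ` {c. c \<noteq> 0}"
    unfolding pact_def proj_pt_def by (auto simp: image_def)
  also have "\<dots> = (\<lambda>c. smul c (tact w t v)) ` {c. c \<noteq> 0}" by (simp add: tact_smul)
  also have "\<dots> = proj_pt (tact w t v)" unfolding proj_pt_def by (auto simp: image_def)
  finally show ?thesis .
qed

lemma pact_one: "pact w (\<lambda>_. 1) p = (p :: ('n \<Rightarrow> 'k::field) set)"
proof -
  have "tact w (\<lambda>_. 1 :: 'k) = (\<lambda>v. v)" by (simp add: tact_def fun_eq_iff)
  thus ?thesis by (simp add: pact_def)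
qed

lemma pact_mult: "pact w (\<lambda>a. s a * s' a) p = pact w s (pact w s' p)"
  unfolding pact_def image_image by (simp add: tact_mult)

lemma image_pact_tinv: "t \<in> torus \<Longrightarrow> pact w (tinv t) ` pact w t ` A = A"
  by (simp add: image_image pact_def tact_tinv)

lemma image_pact_tinv': "t \<in> torus \<Longrightarrow> pact w t ` pact w (tinv t) ` A = A"
  using image_pact_tinv[OF tinv_in_torus] by (simp add: tinv_tinv)

text \<open>Twisting the coefficients by the inverse character transports the zero locus of a
  polynomial along the torus element.\<close>
definition twist :: "('n::finite \<Rightarrow> 'r::finite \<Rightarrow> int) \<Rightarrow> ('r \<Rightarrow> 'k::field)
    \<Rightarrow> (('n \<Rightarrow> nat) \<Rightarrow> 'k) \<Rightarrow> (('n \<Rightarrow> nat) \<Rightarrow> 'k)" where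
  "twist w t f = (\<lambda>m. f m * inverse (mon_eval m (tchar w t)))"

lemma mon_eval_tchar_nonzero: "t \<in> torus \<Longrightarrow> mon_eval m (tchar w t) \<noteq> 0"
  by (simp add: mon_eval_eq_0_iff tchar_nonzero)

lemma peval_twist:
  assumes "t \<in> torus"
  shows "peval (twist w t f) (tact w t v) = peval f v"
proof -
  have nz: "mon_eval m (tchar w t) \<noteq> 0" for m using mon_eval_tchar_nonzero[OF assms] .
  have "psupp (twist w t f) = psupp f" using nz by (auto simp: psupp_def twist_def)
  hence "peval (twist w t f) (tact w t v) = (\<Sum>m\<in>psupp f. twist w t f m * mon_eval m (tact w t v))"
    by (simp add: peval_eq_sum_psupp)
  also have "\<dots> = (\<Sum>m\<in>psupp f. f m * mon_eval m v)"
    by (intro sum.cong refl) (simp add: twist_def tact_eq_tchar mon_eval_mult nz)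
  finally show ?thesis by (simp add: peval_eq_sum_psupp)
qed

lemma homogeneous_twist:
  assumes "t \<in> torus" "homogeneous f"
  shows "homogeneous (twist w t f)"
proof -
  have "twist w t f m \<noteq> 0 \<longleftrightarrow> f m \<noteq> 0" for m
    using mon_eval_tchar_nonzero[OF assms(1), of m w] by (simp add: twist_def)
  thus ?thesis using assms(2) unfolding homogeneous_def is_poly_def by simp
qed

lemma pact_image_vanish:
  assumes t: "t \<in> torus" and F: "\<forall>f\<in>F. homogeneous f"
  shows "pact w t ` vanish F = vanish (twist w t ` F)"
proof -
  have hom: "\<forall>g\<in>twist w t ` F. homogeneous g" using F homogeneous_twist[OF t] by blast
  have pt: "proj_pt (tact w t v) \<in> vanish (twist w t ` F) \<longleftrightarrow> proj_pt v \<in> vanish F"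
    if "v \<noteq> (\<lambda>_. 0)" for v
    using proj_pt_in_vanish_iff[OF hom tact_nonzero[OF t that]] proj_pt_in_vanish_iff[OF F that]
    by (simp add: peval_twist[OF t])
  show ?thesis
  proof
    show "pact w t ` vanish F \<subseteq> vanish (twist w t ` F)"
    proof
      fix q assume "q \<in> pact w t ` vanish F"
      then obtain p where p: "p \<in> vanish F" "q = pact w t p" by blast
      then obtain v where v: "v \<noteq> (\<lambda>_. 0)" "p = proj_pt v" by (auto simp: vanish_def elim: PV_E)
      show "q \<in> vanish (twist w t ` F)" using pt[OF v(1)] p v(2) by (simp add: pact_proj_pt)
    qed
    show "vanish (twist w t ` F) \<subseteq> pact w t ` vanish F"
    proof
      fix q assume q: "q \<in> vanish (twist w t ` F)"
      then obtain u where u: "u \<noteq> (\<lambda>_. 0)" "q = proj_pt u" by (auto simp: vanish_def elim: PV_E)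
      define v where "v = tact w (tinv t) u"
      have u_eq: "u = tact w t v"
        unfolding v_def using tact_tinv[OF tinv_in_torus[OF t], of w u] by (simp add: tinv_tinv)
      have "v \<noteq> (\<lambda>_. 0)" unfolding v_def using tact_nonzero[OF tinv_in_torus[OF t] u(1)] .
      hence "proj_pt v \<in> vanish F" using pt q u(2) u_eq by simp
      moreover have "q = pact w t (proj_pt v)" using u(2) u_eq by (simp add: pact_proj_pt)
      ultimately show "q \<in> pact w t ` vanish F" by blast
    qed
  qed
qed

lemma proj_closed_pact_image:
  assumes t: "t \<in> torus" and Z: "proj_closed Z"
  shows "proj_closed (pact w t ` Z)"
proof -
  obtain F where F: "\<forall>f\<in>F. homogeneous f" "Z = vanish F" using Z proj_closed_iff_vanish by blast
  have "\<forall>g\<in>twist w t ` F. homogeneous g" using F(1) homogeneous_twist[OF t] by blast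
  moreover have "pact w t ` Z = vanish (twist w t ` F)" using pact_image_vanish[OF t F(1)] F(2) by simp
  ultimately show ?thesis unfolding proj_closed_iff_vanish by blast
qed

lemma proj_irreducible_pact_image:
  assumes t: "t \<in> torus" and C: "proj_irreducible C"
  shows "proj_irreducible (pact w t ` C)"
  unfolding proj_irreducible_def
proof (intro conjI allI impI)
  show "proj_closed (pact w t ` C)" using C t proj_closed_pact_image by (auto simp: proj_irreducible_def)
  show "pact w t ` C \<noteq> {}" using C by (auto simp: proj_irreducible_def)
  fix A B assume A: "proj_closed A" and B: "proj_closed B" and AB: "pact w t ` C = A \<union> B"
  have "C = pact w (tinv t) ` A \<union> pact w (tinv t) ` B"
    using arg_cong[OF AB, of "image (pact w (tinv t))"] image_pact_tinv[OF t, of w C]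
    by (simp add: image_Un)
  moreover have "proj_closed (pact w (tinv t) ` A)" "proj_closed (pact w (tinv t) ` B)"
    using proj_closed_pact_image[OF tinv_in_torus[OF t]] A B by auto
  ultimately have "C = pact w (tinv t) ` A \<or> C = pact w (tinv t) ` B"
    using C unfolding proj_irreducible_def by blast
  thus "pact w t ` C = A \<or> pact w t ` C = B"
    using image_pact_tinv'[OF t, of w A] image_pact_tinv'[OF t, of w B] by auto
qed

lemma pact_image_irr_component:
  assumes t: "t \<in> torus" and X: "T_invariant w X" and C: "C \<in> irr_components X"
  shows "pact w t ` C \<in> irr_components X"
proof -
  have inv: "pact w s p \<in> X" if "s \<in> torus" "p \<in> X" for s p
    using X that unfolding T_invariant_def by blast
  have Ci: "proj_irreducible C" "C \<subseteq> X" using C by (auto simp: irr_components_def)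
  show ?thesis
    unfolding irr_components_def mem_Collect_eq
  proof (intro conjI allI impI)
    show "pact w t ` C \<subseteq> X" using Ci(2) inv t by blast
    show "proj_irreducible (pact w t ` C)" using proj_irreducible_pact_image[OF t Ci(1)] .
    fix D assume D: "D \<subseteq> X" "proj_irreducible D" "pact w t ` C \<subseteq> D"
    have "pact w (tinv t) ` D \<subseteq> X" using D(1) inv tinv_in_torus[OF t] by blast
    moreover have "proj_irreducible (pact w (tinv t) ` D)"
      using proj_irreducible_pact_image[OF tinv_in_torus[OF t] D(2)] .
    moreover have "C \<subseteq> pact w (tinv t) ` D"
      using image_mono[OF D(3), of "pact w (tinv t)"] image_pact_tinv[OF t, of w C] by simp
    ultimately have "pact w (tinv t) ` D = C" using C unfolding irr_components_def by blast
    thus "D = pact w t ` C" using image_pact_tinv'[OF t, of w D] by simp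
  qed
qed

section \<open>Components are invariant under the one-parameter subgroup\<close>

lemma alg_closed_infinite:
  assumes "alg_closed TYPE('k::field)"
  shows "infinite (UNIV :: 'k set)"
proof
  assume fin: "finite (UNIV :: 'k set)"
  define q :: "'k poly" where "q = (\<Prod>a\<in>UNIV. [:-a, 1:])"
  have "degree q = card (UNIV :: 'k set)"
    unfolding q_def by (subst degree_prod_eq_sum_degree) auto
  hence "0 < degree (1 + q)" using fin by (simp add: card_gt_0_iff degree_add_eq_right)
  then obtain x where "poly (1 + q) x = 0" using assms unfolding alg_closed_def by blast
  moreover have "poly q x = 0" unfolding q_def poly_prod using fin by (simp add: prod_zero_iff)
  ultimately show False by simp
qed

lemma alg_closed_nth_root:
  fixes c :: "'k::field"
  assumes "alg_closed TYPE('k)" "N > 0"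
  obtains h where "h ^ N = c"
proof -
  define p :: "'k poly" where "p = monom 1 N + [:-c:]"
  have "degree p = N" unfolding p_def using assms(2)
    by (subst degree_add_eq_left) (auto simp: degree_monom_eq)
  then obtain h where "poly p h = 0" using assms unfolding alg_closed_def by blast
  hence "h ^ N = c" by (simp add: p_def poly_monom)
  thus thesis by (rule that)
qed

text \<open>The orbit of \<open>x\<close> has period at most \<open>card K\<close>, and every such period divides
  \<open>fact (card K)\<close>.\<close>
lemma funpow_fact_card_fixpoint:
  assumes p: "inj p" and K: "finite K" "x \<in> K" "\<And>y. y \<in> K \<Longrightarrow> p y \<in> K"
  shows "(p ^^ fact (card K)) x = x"
proof -
  have orbit: "(p ^^ j) x \<in> K" for j by (induction j) (use K in auto)
  have "\<not> inj_on (\<lambda>j. (p ^^ j) x) {0..card K}"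
  proof
    assume "inj_on (\<lambda>j. (p ^^ j) x) {0..card K}"
    hence "card ((\<lambda>j. (p ^^ j) x) ` {0..card K}) = card K + 1" by (simp add: card_image)
    moreover have "card ((\<lambda>j. (p ^^ j) x) ` {0..card K}) \<le> card K"
      using orbit K(1) by (intro card_mono) auto
    ultimately show False by simp
  qed
  then obtain i j where ij: "i < j" "j \<le> card K" "(p ^^ i) x = (p ^^ j) x"
    unfolding inj_on_def by (metis atLeastAtMost_iff linorder_neqE_nat)
  define d where "d = j - i"
  have "(p ^^ i) ((p ^^ d) x) = (p ^^ (i + d)) x" by (simp add: funpow_add)
  also have "\<dots> = (p ^^ i) x" using ij by (simp add: d_def)
  finally have "(p ^^ i) ((p ^^ d) x) = (p ^^ i) x" .
  hence period: "(p ^^ d) x = x" using inj_fn[OF p, of i] by (simp add: inj_eq)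
  have "(p ^^ (d * q)) x = x" for q
    by (induction q) (simp_all add: funpow_add period)
  moreover have "d dvd fact (card K)" using ij by (intro dvd_fact) (auto simp: d_def)
  ultimately show ?thesis by (auto elim!: dvdE)
qed

lemma Sgrp_in_torus: "c \<noteq> 0 \<Longrightarrow> Sgrp lam c \<in> torus"
  by (simp add: Sgrp_def torus_def power_int_not_zero)

lemma Sgrp_mult: "Sgrp lam (c * d) = (\<lambda>a. Sgrp lam c a * Sgrp lam d a)"
  by (simp add: Sgrp_def power_int_mult_distrib)

lemma funpow_image_pact_Sgrp:
  "((\<lambda>A. pact w (Sgrp lam h) ` A) ^^ n) A = pact w (Sgrp lam (h ^ n)) ` A"
proof (induction n)
  case 0 show ?case by (simp add: Sgrp_def pact_one)
next
  case (Suc n) thus ?case by (simp add: image_image pact_mult[symmetric] Sgrp_mult[symmetric])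
qed

text \<open>The torus permutes the finitely many components, so a suitable power of the
  one-parameter subgroup fixes each of them; taking roots in the algebraically closed field
  covers all of \<open>S(\<Bbbk>\<^sup>*)\<close>.\<close>
lemma pact_Sgrp_image_irr_component:
  fixes X :: "('n::finite \<Rightarrow> 'k::field) set set" and w :: "'n \<Rightarrow> 'r::finite \<Rightarrow> int"
  assumes ac: "alg_closed TYPE('k)" and X: "proj_closed X" "T_invariant w X"
    and C: "C \<in> irr_components X" and c: "c \<noteq> 0"
  shows "pact w (Sgrp lam c) ` C = C"
proof -
  define N :: nat where "N = fact (card (irr_components X))"
  obtain h where h: "h ^ N = c" using alg_closed_nth_root[OF ac, of N] by (auto simp: N_def)
  hence "h \<noteq> 0" using c by (auto simp: N_def)
  hence t: "Sgrp lam h \<in> torus" by (rule Sgrp_in_torus)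
  define \<phi> where "\<phi> A = pact w (Sgrp lam h) ` A" for A
  have "inj \<phi>"
  proof (rule injI)
    fix A B assume "\<phi> A = \<phi> B"
    hence "pact w (tinv (Sgrp lam h)) ` \<phi> A = pact w (tinv (Sgrp lam h)) ` \<phi> B" by simp
    thus "A = B" unfolding \<phi>_def image_pact_tinv[OF t] .
  qed
  moreover have "\<phi> A \<in> irr_components X" if "A \<in> irr_components X" for A
    unfolding \<phi>_def using pact_image_irr_component[OF t X(2) that] .
  ultimately have "(\<phi> ^^ N) C = C"
    unfolding N_def by (rule funpow_fact_card_fixpoint[OF _ finite_irr_components[OF X(1)] C])
  thus ?thesis unfolding \<phi>_def funpow_image_pact_Sgrp h .
qed

section \<open>Limits under the one-parameter subgroup\<close>

definition min_weight :: "('n::finite \<Rightarrow> 'r::finite \<Rightarrow> int) \<Rightarrow> ('r \<Rightarrow> int) \<Rightarrow> ('n \<Rightarrow> 'k::field) \<Rightarrow> int" where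
  "min_weight w lam v = Min (sweight w lam ` {j. v j \<noteq> 0})"

definition lead_part :: "('n::finite \<Rightarrow> 'r::finite \<Rightarrow> int) \<Rightarrow> ('r \<Rightarrow> int) \<Rightarrow> ('n \<Rightarrow> 'k::field) \<Rightarrow> ('n \<Rightarrow> 'k)" where
  "lead_part w lam v = (\<lambda>j. if sweight w lam j = min_weight w lam v then v j else 0)"

definition mweight :: "('n::finite \<Rightarrow> int) \<Rightarrow> ('n \<Rightarrow> nat) \<Rightarrow> int" where
  "mweight e m = (\<Sum>j\<in>UNIV. int (m j) * e j)"

lemma min_weight_le: "v j \<noteq> 0 \<Longrightarrow> min_weight w lam v \<le> sweight w lam j"
  unfolding min_weight_def by (intro Min_le) auto

lemma lead_part_nonzero:
  assumes "v \<noteq> (\<lambda>_. 0)"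
  shows "lead_part w lam v \<noteq> (\<lambda>_. (0::'k::field))"
proof -
  have "min_weight w lam v \<in> sweight w lam ` {j. v j \<noteq> 0}"
    unfolding min_weight_def using assms by (intro Min_in) auto
  then obtain j where "v j \<noteq> 0" "sweight w lam j = min_weight w lam v" by auto
  hence "lead_part w lam v j \<noteq> 0" by (simp add: lead_part_def)
  thus ?thesis by auto
qed

lemma power_int_sum:
  fixes c :: "'k::field"
  assumes "c \<noteq> 0"
  shows "(\<Prod>a\<in>A. c powi f a) = c powi (\<Sum>a\<in>A. f a)"
  by (induction A rule: infinite_finite_induct) (auto simp: power_int_add assms)

lemma tact_Sgrp:
  fixes c :: "'k::field"
  assumes "c \<noteq> 0"
  shows "tact w (Sgrp lam c) v = (\<lambda>j. c powi sweight w lam j * v j)"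
proof -
  have "(c powi lam a) powi w j a = c powi (w j a * lam a)" for j a
    using power_int_mult[of c "lam a" "w j a"] by (simp add: mult.commute)
  thus ?thesis by (simp add: tact_def Sgrp_def sweight_def power_int_sum assms)
qed

lemma mon_eval_powi_scale:
  fixes c :: "'k::field"
  assumes "c \<noteq> 0"
  shows "mon_eval m (\<lambda>j. c powi e j * v j) = c powi mweight e m * mon_eval m v"
proof -
  have "(c powi e j) ^ m j = c powi (int (m j) * e j)" for j
    using power_int_mult[of c "e j" "int (m j)"] by (simp add: power_int_of_nat mult.commute)
  hence "mon_eval m (\<lambda>j. c powi e j) = c powi mweight e m"
    by (simp add: mon_eval_def mweight_def power_int_sum assms)
  thus ?thesis by (simp add: mon_eval_mult)
qed

lemma mweight_const: "mweight (\<lambda>_. a) m = a * int (mdeg m)"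
  by (simp add: mweight_def mdeg_def sum_distrib_left mult.commute)

lemma min_weight_term_le:
  assumes "mon_eval m v \<noteq> (0::'k::field)"
  shows "int (m j) * min_weight w lam v \<le> int (m j) * sweight w lam j"
proof (cases "m j = 0")
  case False
  hence "v j \<noteq> 0" using assms mon_eval_eq_0_iff by blast
  thus ?thesis using min_weight_le by (intro mult_left_mono) auto
qed simp

lemma min_weight_mdeg_le_mweight:
  assumes "mon_eval m v \<noteq> (0::'k::field)"
  shows "min_weight w lam v * int (mdeg m) \<le> mweight (sweight w lam) m"
  unfolding mweight_const[symmetric] mweight_def
  using min_weight_term_le[OF assms] by (intro sum_mono)

lemma mon_eval_lead_part:
  assumes nz: "mon_eval m v \<noteq> (0::'k::field)"
  shows "mon_eval m (lead_part w lam v) =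
    (if mweight (sweight w lam) m = min_weight w lam v * int (mdeg m) then mon_eval m v else 0)"
proof (cases "\<forall>j. m j > 0 \<longrightarrow> sweight w lam j = min_weight w lam v")
  case True
  have "lead_part w lam v j ^ m j = v j ^ m j" for j
    using True by (cases "m j = 0") (auto simp: lead_part_def)
  hence same: "mon_eval m (lead_part w lam v) = mon_eval m v" by (simp add: mon_eval_def)
  have eq: "int (m j) * sweight w lam j = int (m j) * min_weight w lam v" for j
    using True by (cases "m j = 0") auto
  have "mweight (sweight w lam) m = min_weight w lam v * int (mdeg m)"
    unfolding mweight_const[symmetric] by (simp only: mweight_def eq)
  thus ?thesis using same by simp
next
  case False
  then obtain j where j: "m j > 0" "sweight w lam j \<noteq> min_weight w lam v" by blast
  have "v j \<noteq> 0" using nz j(1) mon_eval_eq_0_iff by blast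
  hence "lead_part w lam v j = 0" and less: "min_weight w lam v < sweight w lam j"
    using j(2) min_weight_le[of v j w lam] by (auto simp: lead_part_def)
  hence "mon_eval m (lead_part w lam v) = 0" using j(1) mon_eval_eq_0_iff by blast
  moreover have "mweight (\<lambda>_. min_weight w lam v) m < mweight (sweight w lam) m"
    unfolding mweight_def
  proof (rule sum_strict_mono_ex1)
    show "\<forall>i\<in>UNIV. int (m i) * min_weight w lam v \<le> int (m i) * sweight w lam i"
      using min_weight_term_le[OF nz] by blast
    show "\<exists>i\<in>UNIV. int (m i) * min_weight w lam v < int (m i) * sweight w lam i"
      using less j(1) by (intro bexI[of _ j]) (auto intro: mult_strict_left_mono)
  qed simp
  ultimately show ?thesis by (simp add: mweight_const)
qed

text \<open>For homogeneous \<open>f\<close> of degree \<open>d\<close>, \<open>c \<mapsto> f (S(c) v)\<close> is \<open>c\<^sup>\<mu>\<^sup>d\<close> times this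
  polynomial in \<open>c\<close>, where \<open>\<mu>\<close> is the minimal weight on the support of \<open>v\<close>.\<close>
definition limit_poly :: "('n::finite \<Rightarrow> 'r::finite \<Rightarrow> int) \<Rightarrow> ('r \<Rightarrow> int) \<Rightarrow> ('n \<Rightarrow> 'k::field)
    \<Rightarrow> (('n \<Rightarrow> nat) \<Rightarrow> 'k) \<Rightarrow> nat \<Rightarrow> 'k poly" where
  "limit_poly w lam v f d = (\<Sum>m\<in>psupp f. monom (f m * mon_eval m v)
      (nat (mweight (sweight w lam) m - min_weight w lam v * int d)))"

lemma mweight_ge_of_homogeneous:
  assumes "homogeneous_deg f d" "f m \<noteq> 0" "mon_eval m v \<noteq> 0"
  shows "min_weight w lam v * int d \<le> mweight (sweight w lam) m"
  using assms min_weight_mdeg_le_mweight[of m v w lam] by (simp add: homogeneous_deg_def)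

lemma poly_limit_poly:
  fixes c :: "'k::field"
  assumes f: "homogeneous_deg f d" and c: "c \<noteq> 0"
  shows "c powi (min_weight w lam v * int d) * poly (limit_poly w lam v f d) c
    = peval f (tact w (Sgrp lam c) v)"
proof -
  let ?\<mu>d = "min_weight w lam v * int d" and ?E = "mweight (sweight w lam)"
  have "c powi ?\<mu>d * poly (limit_poly w lam v f d) c
      = (\<Sum>m\<in>psupp f. f m * mon_eval m v * c powi ?E m)"
    unfolding limit_poly_def poly_sum poly_monom sum_distrib_left
  proof (intro sum.cong refl)
    fix m
    show "c powi ?\<mu>d * (f m * mon_eval m v * c ^ nat (?E m - ?\<mu>d))
        = f m * mon_eval m v * c powi ?E m"
    proof (cases "f m * mon_eval m v = 0")
      case False
      hence "?\<mu>d \<le> ?E m" using mweight_ge_of_homogeneous[OF f] by auto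
      hence "c powi ?\<mu>d * c ^ nat (?E m - ?\<mu>d) = c powi ?E m"
        using c by (simp add: power_int_of_nat[symmetric] power_int_add[symmetric])
      thus ?thesis by (simp add: mult_ac)
    qed auto
  qed
  also have "\<dots> = peval f (tact w (Sgrp lam c) v)"
    unfolding peval_eq_sum_psupp tact_Sgrp[OF c] mon_eval_powi_scale[OF c] by (simp add: mult_ac)
  finally show ?thesis .
qed

lemma poly_limit_poly_0:
  assumes f: "homogeneous_deg f d"
  shows "poly (limit_poly w lam v f d) 0 = peval f (lead_part w lam v)"
  unfolding limit_poly_def poly_sum poly_monom peval_eq_sum_psupp
proof (intro sum.cong refl)
  fix m assume m: "m \<in> psupp f"
  show "f m * mon_eval m v * 0 ^ nat (mweight (sweight w lam) m - min_weight w lam v * int d)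
      = f m * mon_eval m (lead_part w lam v)"
  proof (cases "mon_eval m v = 0")
    case True
    hence "mon_eval m (lead_part w lam v) = 0" by (auto simp: mon_eval_eq_0_iff lead_part_def)
    thus ?thesis using True by simp
  next
    case False
    have "mdeg m = d" using m f by (simp add: homogeneous_deg_def psupp_def)
    thus ?thesis
      using mon_eval_lead_part[OF False, of w lam] min_weight_mdeg_le_mweight[OF False, of w lam]
      by auto
  qed
qed

text \<open>The polynomial vanishes on the infinite set \<open>\<Bbbk>\<^sup>*\<close>, so also at \<open>0\<close>.\<close>
lemma peval_lead_part_eq_0:
  fixes f :: "('n::finite \<Rightarrow> nat) \<Rightarrow> 'k::field" and w :: "'n \<Rightarrow> 'r::finite \<Rightarrow> int"
  assumes inf: "infinite (UNIV :: 'k set)" and f: "homogeneous_deg f d"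
    and vanish: "\<And>c. c \<noteq> 0 \<Longrightarrow> peval f (tact w (Sgrp lam c) v) = 0"
  shows "peval f (lead_part w lam v) = 0"
proof -
  let ?P = "limit_poly w lam v f d"
  have "poly ?P c = 0" if "c \<noteq> 0" for c
    using poly_limit_poly[OF f that, of w lam v] vanish[OF that] that by (simp add: power_int_not_zero)
  hence "?P = 0"
    using poly_roots_finite[of ?P] inf finite_subset[of "UNIV - {0}" "{x. poly ?P x = 0}"] by auto
  thus ?thesis using poly_limit_poly_0[OF f, of w lam v] by simp
qed

lemma S_limit_proj_pt:
  fixes v :: "'n::finite \<Rightarrow> 'k::field"
  shows "S_limit w lam (proj_pt v) = proj_pt (lead_part w lam v)"
proof -
  define u where "u = (SOME u. u \<in> proj_pt v)"
  have "u \<in> proj_pt v" unfolding u_def by (rule someI[of _ v]) (rule proj_pt_self)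
  then obtain c where c: "c \<noteq> 0" "u = smul c v" by (auto simp: proj_pt_def)
  have "{j. u j \<noteq> 0} = {j. v j \<noteq> 0}" using c by (auto simp: smul_def)
  hence "(\<lambda>j. if sweight w lam j = Min (sweight w lam ` {j. u j \<noteq> 0}) then u j else 0)
      = smul c (lead_part w lam v)"
    by (auto simp: lead_part_def min_weight_def smul_def c(2) fun_eq_iff)
  hence "S_limit w lam (proj_pt v) = proj_pt (smul c (lead_part w lam v))"
    unfolding S_limit_def Let_def u_def[symmetric] by simp
  thus ?thesis using proj_pt_smul[OF c(1)] by simp
qed

lemma S_limit_in_closed:
  fixes C :: "('n::finite \<Rightarrow> 'k::field) set set" and w :: "'n \<Rightarrow> 'r::finite \<Rightarrow> int"
  assumes inf: "infinite (UNIV :: 'k set)" and C: "proj_closed C" and z: "z \<in> C"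
    and inv: "\<And>c. c \<noteq> 0 \<Longrightarrow> pact w (Sgrp lam c) z \<in> C"
  shows "S_limit w lam z \<in> C"
proof -
  obtain F where F: "\<forall>f\<in>F. homogeneous f" "C = vanish F" using C proj_closed_iff_vanish by blast
  obtain v where v: "v \<noteq> (\<lambda>_. 0)" "z = proj_pt v"
    using z F(2) by (auto simp: vanish_def elim: PV_E)
  have "peval f (lead_part w lam v) = 0" if f: "f \<in> F" for f
  proof -
    obtain d where d: "homogeneous_deg f d" using F(1) f homogeneous_iff_ex_deg by blast
    have "peval f (tact w (Sgrp lam c) v) = 0" if c: "c \<noteq> 0" for c
    proof -
      have "proj_pt (tact w (Sgrp lam c) v) \<in> vanish F"
        using inv[OF c] v(2) F(2) by (simp add: pact_proj_pt)
      thus ?thesis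
        using proj_pt_in_vanish_iff[OF F(1) tact_nonzero[where w=w, OF Sgrp_in_torus[where lam=lam, OF c] v(1)]] f
        by simp
    qed
    thus ?thesis using peval_lead_part_eq_0[OF inf d] by blast
  qed
  hence "proj_pt (lead_part w lam v) \<in> C"
    using proj_pt_in_vanish_iff[OF F(1) lead_part_nonzero[where w=w and lam=lam, OF v(1)]] F(2)
    by simp
  thus ?thesis using S_limit_proj_pt[of w lam v] v(2) by simp
qed

section \<open>Closure chains of a finite closed cover\<close>

lemma chain_closure_Nil: "chain_closure w lam Z [] = Z"
  by (simp add: chain_closure_def)

lemma chain_closure_snoc:
  "chain_closure w lam Z (fs @ [f]) = pclosure (chain_closure w lam Z fs \<inter> BB_stratum w lam Z f)"
  by (simp add: chain_closure_def)

lemma chain_closure_subset: "proj_closed Z \<Longrightarrow> chain_closure w lam Z fs \<subseteq> Z"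
proof (induction fs rule: rev_induct)
  case Nil thus ?case by (simp add: chain_closure_Nil)
next
  case (snoc f fs)
  thus ?case unfolding chain_closure_snoc by (intro pclosure_minimal) auto
qed

lemma chain_closure_mono:
  assumes "C \<subseteq> X"
  shows "chain_closure w lam C fs \<subseteq> chain_closure w lam X fs"
proof (induction fs rule: rev_induct)
  case Nil thus ?case using assms by (simp add: chain_closure_Nil)
next
  case (snoc f fs)
  have "BB_stratum w lam C f \<subseteq> BB_stratum w lam X f" using assms by (auto simp: BB_stratum_def)
  thus ?case unfolding chain_closure_snoc using snoc by (intro pclosure_mono) blast
qed

text \<open>Strata of \<open>X\<close> restrict to strata of the pieces, and closure commutes with finite
  unions.\<close>
lemma chain_closure_subset_UN:
  fixes X :: "('n::finite \<Rightarrow> 'k::field) set set"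
  assumes K: "finite K" "\<Union>K = X" "\<forall>C\<in>K. proj_closed C"
  shows "chain_closure w lam X fs \<subseteq> (\<Union>C\<in>K. chain_closure w lam C fs)"
proof (induction fs rule: rev_induct)
  case Nil thus ?case using K by (simp add: chain_closure_Nil)
next
  case (snoc f fs)
  let ?A = "\<lambda>C. chain_closure w lam C fs \<inter> BB_stratum w lam C f"
  have "chain_closure w lam X fs \<inter> BB_stratum w lam X f \<subseteq> (\<Union>C\<in>K. ?A C)"
  proof
    fix x assume x: "x \<in> chain_closure w lam X fs \<inter> BB_stratum w lam X f"
    then obtain C where C: "C \<in> K" "x \<in> chain_closure w lam C fs" using snoc by blast
    hence "x \<in> C" using chain_closure_subset K(3) by blast
    thus "x \<in> (\<Union>C\<in>K. ?A C)" using x C by (auto simp: BB_stratum_def)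
  qed
  hence "chain_closure w lam X (fs @ [f]) \<subseteq> pclosure (\<Union>C\<in>K. ?A C)"
    unfolding chain_closure_snoc by (rule pclosure_mono)
  also have "\<dots> = (\<Union>C\<in>K. pclosure (?A C))"
    using K(1,3) chain_closure_subset proj_closed_subset_PV
    by (intro pclosure_UN_finite) blast+
  finally show ?case unfolding chain_closure_snoc .
qed

lemma chain_closure_nonempty_imp_subset:
  assumes lim: "\<forall>z\<in>C. S_limit w lam z \<in> C"
  shows "chain_closure w lam C fs \<noteq> {} \<Longrightarrow> set fs \<subseteq> C"
proof (induction fs rule: rev_induct)
  case Nil thus ?case by simp
next
  case (snoc f fs)
  then obtain z where "z \<in> chain_closure w lam C fs" "z \<in> BB_stratum w lam C f"
    unfolding chain_closure_snoc using pclosure_empty by (metis disjoint_iff)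
  thus ?case using snoc.IH lim by (auto simp: BB_stratum_def)
qed

lemma closure_chain_mono:
  assumes "C \<subseteq> X" "closure_chain w lam C fs"
  shows "closure_chain w lam X fs"
  using assms chain_closure_mono[OF assms(1), of w lam fs]
  by (auto simp: closure_chain_def S_fixed_def)

lemma Delta_subset_UN:
  fixes X :: "('n::finite \<Rightarrow> 'k::field) set set"
  assumes K: "finite K" "\<Union>K = X" "\<forall>C\<in>K. proj_closed C"
    and lim: "\<And>C z. C \<in> K \<Longrightarrow> z \<in> C \<Longrightarrow> S_limit w lam z \<in> C"
  shows "Delta w lam X \<subseteq> (\<Union>C\<in>K. Delta w lam C)"
proof
  fix s assume "s \<in> Delta w lam X"
  then obtain fs where fs: "s = set fs" "closure_chain w lam X fs" by (auto simp: Delta_def)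
  hence "chain_closure w lam X fs \<noteq> {}" by (simp add: closure_chain_def)
  then obtain C where C: "C \<in> K" "chain_closure w lam C fs \<noteq> {}"
    using chain_closure_subset_UN[OF K, of w lam fs] by blast
  hence "set fs \<subseteq> C" using chain_closure_nonempty_imp_subset lim by blast
  hence "closure_chain w lam C fs"
    using fs(2) C by (auto simp: closure_chain_def S_fixed_def)
  thus "s \<in> (\<Union>C\<in>K. Delta w lam C)" using fs(1) C(1) by (auto simp: Delta_def)
qed

theorem corollary3p1:
  fixes w :: "'n::finite \<Rightarrow> 'r::finite \<Rightarrow> int"
    and lam :: "'r \<Rightarrow> int"
    and X :: "('n \<Rightarrow> 'k::field) set set"
  assumes "alg_closed TYPE('k)"
    and "proj_closed X"
    and "T_invariant w X"
    and "finite (T_fixed w X)"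
    and "S_fixed w lam X = T_fixed w X"
  shows "Delta w lam X = (\<Union>C\<in>irr_components X. Delta w lam C)"
proof
  have lim: "S_limit w lam z \<in> C" if C: "C \<in> irr_components X" and z: "z \<in> C" for C z
  proof (rule S_limit_in_closed[OF alg_closed_infinite[OF assms(1)] irr_component_closed[OF C] z])
    fix c :: 'k assume "c \<noteq> 0"
    thus "pact w (Sgrp lam c) z \<in> C"
      using pact_Sgrp_image_irr_component[OF assms(1-3) C] z by blast
  qed
  show "Delta w lam X \<subseteq> (\<Union>C\<in>irr_components X. Delta w lam C)"
  proof (rule Delta_subset_UN)
    show "finite (irr_components X)" "\<Union>(irr_components X) = X"
      using finite_irr_components[OF assms(2)] Union_irr_components[OF assms(2)] .
  qed (use irr_component_closed lim in auto)
  show "(\<Union>C\<in>irr_components X. Delta w lam C) \<subseteq> Delta w lam X"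
    unfolding Delta_def using closure_chain_mono[OF irr_component_subset] by blast
qed

end
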